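(* Let $P$ be a monopolar $k$-chain in $V$ and $r\ge0$. Then $$|P|^{\natural_r}=\inf\Big\{\sum_{j=0}^r\|D^j\|_j:\ P=\sum_{j=0}^rD^j,\ D^j\in\mathcal D_k^j\Big\}.$$
   Context: $V$ is a finite-dimensional real vector space with inner product making a preferred basis orthonormal, norm $|\cdot|$. For a simple $k$-vector $\alpha=w_1\wedge\dots\wedge w_k$, $M(\alpha)$ is its mass ($k$-dimensional volume, $\sqrt{\det\langle w_i,w_j\rangle}$). A monopolar $k$-chain is a finite formal sum $P=\sum_i(p_i;\alpha_i)$ with $p_i\in V$, $\alpha_i\in\Lambda_k(V)$, subject to $(p;\alpha)+(p;\beta)=(p;\alpha+\beta)$, $t(p;\alpha)=(p;t\alpha)$; these form the vector space $\mathcal P_k^0(V)$. Translation: $T_u(p;\alpha)=(p+u;\alpha)$, extended linearly; $\Delta_u=T_u-\mathrm{id}$; for $U=(u_1,\dots,u_j)$, $\Delta^j_U=\Delta_{u_1}\circ\dots\circ\Delta_{u_j}$ ($\Delta^0$ = identity); $\|\Delta^j_U(p;\alpha)\|_j=|u_1|\cdots|u_j|M(\alpha)$. A $k$-form is a linear functional $\omega$ on $\mathcal P_k^0(V)$. Set $\|\omega\|_0=\sup\{|\omega(p;\alpha)|:\alpha\text{ simple},M(\alpha)=1\}$ and, for $j\ge1$, $\|\omega\|_j=\sup\{|\omega(\Delta^j_U(p;\alpha))|:\|\Delta^j_U(p;\alpha)\|_j=1\}$ ($\alpha$ simple); $|\omega|^{\natural_r}=\max\{\|\omega\|_0,\dots,\|\omega\|_r\}$,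 and $\mathcal B_k^r$ is the space of $k$-forms with $|\omega|^{\natural_r}<\infty$. For $P\in\mathcal P_k^0(V)$, $|P|^{\natural_r}=\sup_{0\ne\omega\in\mathcal B_k^r}\omega(P)/|\omega|^{\natural_r}$. $\mathcal D_k^j$ is the subspace of $\mathcal P_k^0(V)$ spanned by the chains $\Delta^j_U(p;\alpha)$ ($\mathcal D_k^0=\mathcal P_k^0(V)$), and for $D^j\in\mathcal D_k^j$, $\|D^j\|_j=\sup\omega(D^j)/\|\omega\|_j$ over $k$-forms with $0<\|\omega\|_j<\infty$. *)

theory Defs
  imports "HOL-Analysis.Analysis"
begin

text \<open>V is modelled by a Euclidean space 'a (finite-dimensional, inner product with
orthonormal Basis).  A k-vector alpha is represented faithfully (injectively) by the
function I \<mapsto> <alpha, I_1 \<and> ... \<and> I_k> on lists I of length k; a monopolar chain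
is represented by its coefficient function p \<mapsto> alpha_p (finite support).\<close>

definition detk :: "nat \<Rightarrow> (nat \<Rightarrow> nat \<Rightarrow> real) \<Rightarrow> real" where
  "detk n M = (\<Sum>\<sigma> | \<sigma> permutes {..<n}. of_int (sign \<sigma>) * (\<Prod>a<n. M a (\<sigma> a)))"

definition wedge :: "'a::euclidean_space list \<Rightarrow> 'a list \<Rightarrow> real" where
  "wedge w I = (if length I = length w
     then detk (length w) (\<lambda>a b. inner (w ! a) (I ! b)) else 0)"

definition mass :: "'a::euclidean_space list \<Rightarrow> real" where
  "mass w = sqrt (detk (length w) (\<lambda>a b. inner (w ! a) (w ! b)))"

definition kvectors :: "nat \<Rightarrow> ('a::euclidean_space list \<Rightarrow> real) set" where
  "kvectors k = {\<alpha>. \<exists>n c (w :: nat \<Rightarrow> 'a list). (\<forall>i<n. length (w i) = k) \<and>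
                      \<alpha> = (\<lambda>I. \<Sum>i<n. c i * wedge (w i) I)}"

type_synonym 'a chain = "'a \<Rightarrow> 'a list \<Rightarrow> real"

definition mono :: "'a \<Rightarrow> ('a list \<Rightarrow> real) \<Rightarrow> 'a chain" where
  "mono p \<alpha> = (\<lambda>q. if q = p then \<alpha> else (\<lambda>_. 0))"

definition chains :: "nat \<Rightarrow> ('a::euclidean_space) chain set" where
  "chains k = {P. finite {p. P p \<noteq> (\<lambda>_. 0)} \<and> (\<forall>p. P p \<in> kvectors k)}"

definition cadd :: "'a chain \<Rightarrow> 'a chain \<Rightarrow> 'a chain" where
  "cadd P Q = (\<lambda>q I. P q I + Q q I)"

definition cscale :: "real \<Rightarrow> 'a chain \<Rightarrow> 'a chain" where
  "cscale c P = (\<lambda>q I. c * P q I)"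

definition transl :: "'a::euclidean_space \<Rightarrow> 'a chain \<Rightarrow> 'a chain" where
  "transl u P = (\<lambda>q. P (q - u))"

definition delta :: "'a::euclidean_space \<Rightarrow> 'a chain \<Rightarrow> 'a chain" where
  "delta u P = (\<lambda>q I. transl u P q I - P q I)"

definition deltas :: "'a::euclidean_space list \<Rightarrow> 'a chain \<Rightarrow> 'a chain" where
  "deltas U P = foldr delta U P"

definition Ddiff :: "nat \<Rightarrow> nat \<Rightarrow> ('a::euclidean_space) chain set" where
  "Ddiff k j = {D. \<exists>n c (U :: nat \<Rightarrow> 'a list) (p :: nat \<Rightarrow> 'a) (w :: nat \<Rightarrow> 'a list). (\<forall>i<n. length (U i) = j \<and> length (w i) = k) \<and>
      D = (\<lambda>q I. \<Sum>i<n. c i * deltas (U i) (mono (p i) (wedge (w i))) q I)}"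

text \<open>k-forms: linear functionals on P_k^0(V) (values off chains are irrelevant).\<close>
definition kform :: "nat \<Rightarrow> ('a::euclidean_space chain \<Rightarrow> real) \<Rightarrow> bool" where
  "kform k \<Omega> \<longleftrightarrow> (\<forall>P\<in>chains k. \<forall>Q\<in>chains k. \<Omega> (cadd P Q) = \<Omega> P + \<Omega> Q) \<and>
                  (\<forall>c. \<forall>P\<in>chains k. \<Omega> (cscale c P) = c * \<Omega> P)"

text \<open>||omega||_j (j = 0 gives ||omega||_0, since Delta^0 = id and the weight is M(alpha)).\<close>
definition formnorm :: "nat \<Rightarrow> nat \<Rightarrow> ('a::euclidean_space chain \<Rightarrow> real) \<Rightarrow> ennreal" where
  "formnorm k j \<Omega> = Sup {ennreal \<bar>\<Omega> (deltas U (mono p (wedge w)))\<bar> | U p w.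
      length U = j \<and> length w = k \<and> prod_list (map norm U) * mass w = 1}"

definition natnorm :: "nat \<Rightarrow> nat \<Rightarrow> ('a::euclidean_space chain \<Rightarrow> real) \<Rightarrow> ennreal" where
  "natnorm k r \<Omega> = Max ((\<lambda>j. formnorm k j \<Omega>) ` {..r})"

text \<open>|P|^{natural_r}; the supremum ranges over nonzero forms in B_k^r.
  (0 is inserted only to fix sup of the empty set; it does not change the
  supremum otherwise, since omega and -omega both occur.)\<close>
definition chain_natnorm :: "nat \<Rightarrow> nat \<Rightarrow> 'a::euclidean_space chain \<Rightarrow> ereal" where
  "chain_natnorm k r P = Sup (insert 0 {ereal (\<Omega> P / enn2real (natnorm k r \<Omega>)) | \<Omega>.
      kform k \<Omega> \<and> (\<exists>Q\<in>chains k. \<Omega> Q \<noteq> 0) \<and> natnorm k r \<Omega> < top})"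

definition Dnorm :: "nat \<Rightarrow> nat \<Rightarrow> 'a::euclidean_space chain \<Rightarrow> ereal" where
  "Dnorm k j D = Sup (insert 0 {ereal (\<Omega> D / enn2real (formnorm k j \<Omega>)) | \<Omega>.
      kform k \<Omega> \<and> 0 < formnorm k j \<Omega> \<and> formnorm k j \<Omega> < top})"

end

theory Submission
  imports Defs "Jordan_Normal_Form.Determinant" "HOL-Library.Function_Algebras"
begin

(* If P = D^0 + ... + D^r with D^j in D_k^j, then for every form omega
   omega(D^j) <= ||D^j||_j ||omega||_j <= ||D^j||_j |omega|^r, which bounds |P|^r by the cost
   of the decomposition.  Conversely, the infimum N(P) of these costs is a sublinear functional
   on chains, and Hahn-Banach gives a linear omega <= N with omega(P) = N(P).  A normalised
   difference chain Delta^j_U(p; alpha) with j <= r is its own decomposition of cost at most 1,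
   so ||omega||_j <= 1 for all j <= r, i.e. |omega|^r <= 1, and hence
   |P|^r >= omega(P) / |omega|^r >= N(P). *)

section \<open>Functions as a real vector space\<close>

instantiation "fun" :: (type, real_vector) real_vector
begin

definition scaleR_fun :: "real \<Rightarrow> ('a \<Rightarrow> 'b) \<Rightarrow> 'a \<Rightarrow> 'b" where
  "scaleR_fun c f = (\<lambda>x. c *\<^sub>R f x)"

instance
  by standard (simp_all add: scaleR_fun_def fun_eq_iff algebra_simps)

end

lemma scaleR_fun_apply [simp]: "(c *\<^sub>R f) x = c *\<^sub>R f x"
  by (simp add: scaleR_fun_def)

lemma sum_fun_apply: "(\<Sum>i\<in>A. f i) x = (\<Sum>i\<in>A. f i x)"
  by (induction A rule: infinite_finite_induct) auto

lemma span_image_eq_indexed_sums: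
  "span (g ` A) = {\<Sum>i<n. c i *\<^sub>R g (x i) | (n :: nat) c x. \<forall>i<n. x i \<in> A}"
proof (intro antisym subsetI)
  fix y assume "y \<in> span (g ` A)"
  then show "y \<in> {\<Sum>i<n. c i *\<^sub>R g (x i) | (n :: nat) c x. \<forall>i<n. x i \<in> A}"
  proof (induction rule: span_induct_alt)
    case base
    have "0 = (\<Sum>i<(0::nat). c i *\<^sub>R g (x i))" for c x
      by simp
    then show ?case
      by blast
  next
    case (step c b y)
    then obtain a and n :: nat and c' x
      where "a \<in> A" "b = g a" "\<forall>i<n. x i \<in> A" "y = (\<Sum>i<n. c' i *\<^sub>R g (x i))"
      by blast
    then show ?case
      by (intro CollectI exI[of _ "Suc n"] exI[of _ "case_nat c c'"] exI[of _ "case_nat a x"])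
        (auto simp: sum.lessThan_Suc_shift less_Suc_eq_0_disj simp del: sum.lessThan_Suc)
  qed
next
  fix y assume "y \<in> {\<Sum>i<n. c i *\<^sub>R g (x i) | (n :: nat) c x. \<forall>i<n. x i \<in> A}"
  then show "y \<in> span (g ` A)"
    by (auto intro!: span_sum simp: span_scale span_base)
qed

section \<open>Hahn-Banach for sublinear functionals on a subspace\<close>

(* A linear functional defined on a subspace through x0, dominated by p and equal to p at x0,
   encoded by its graph so that extensions are ordered by inclusion and Zorn's lemma applies. *)
definition minorant_graph :: "'v::real_vector set \<Rightarrow> ('v \<Rightarrow> real) \<Rightarrow> 'v \<Rightarrow> ('v \<times> real) set \<Rightarrow> bool" where
  "minorant_graph S p x0 G \<longleftrightarrow> (x0, p x0) \<in> G \<and>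
     (\<forall>x a. (x, a) \<in> G \<longrightarrow> x \<in> S) \<and> (\<forall>x a. (x, a) \<in> G \<longrightarrow> a \<le> p x) \<and>
     (\<forall>x a y b. (x, a) \<in> G \<longrightarrow> (y, b) \<in> G \<longrightarrow> (x + y, a + b) \<in> G) \<and>
     (\<forall>x a t. (x, a) \<in> G \<longrightarrow> (t *\<^sub>R x, t * a) \<in> G) \<and>
     (\<forall>x a b. (x, a) \<in> G \<longrightarrow> (x, b) \<in> G \<longrightarrow> a = b)"

lemma minorant_graphD:
  assumes "minorant_graph S p x0 G"
  shows minorant_graph_x0: "(x0, p x0) \<in> G"
    and minorant_graph_in: "(x, a) \<in> G \<Longrightarrow> x \<in> S"
    and minorant_graph_le: "(x, a) \<in> G \<Longrightarrow> a \<le> p x"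
    and minorant_graph_add: "(x, a) \<in> G \<Longrightarrow> (y, b) \<in> G \<Longrightarrow> (x + y, a + b) \<in> G"
    and minorant_graph_scaleR: "(x, a) \<in> G \<Longrightarrow> (t *\<^sub>R x, t * a) \<in> G"
    and minorant_graph_unique: "(x, a) \<in> G \<Longrightarrow> (x, b) \<in> G \<Longrightarrow> a = b"
  using assms unfolding minorant_graph_def by blast+

lemma minorant_graph_zero: "minorant_graph S p x0 G \<Longrightarrow> (0, 0) \<in> G"
  by (metis minorant_graph_scaleR minorant_graph_x0 mult_zero_left scaleR_zero_left)

definition extend_graph :: "('v \<times> real) set \<Rightarrow> 'v \<Rightarrow> real \<Rightarrow> ('v::real_vector \<times> real) set" where
  "extend_graph M y c = {(x + t *\<^sub>R y, a + t * c) | x a t. (x, a) \<in> M}"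

lemma extend_graph_add:
  assumes "\<And>x a x' a'. (x, a) \<in> M \<Longrightarrow> (x', a') \<in> M \<Longrightarrow> (x + x', a + a') \<in> M"
    and "(z, v) \<in> extend_graph M y c" "(z', v') \<in> extend_graph M y c"
  shows "(z + z', v + v') \<in> extend_graph M y c"
proof -
  obtain x a t x' a' t' where "(x, a) \<in> M" "(x', a') \<in> M"
    and "z = x + t *\<^sub>R y" "v = a + t * c" "z' = x' + t' *\<^sub>R y" "v' = a' + t' * c"
    using assms(2,3) unfolding extend_graph_def by blast
  moreover from this have "(x + x', a + a') \<in> M"
    using assms(1) by blast
  ultimately show ?thesis
    unfolding extend_graph_def
    by (intro CollectI exI[of _ "x + x'"] exI[of _ "a + a'"] exI[of _ "t + t'"] conjI)
      (simp_all add: algebra_simps)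
qed

lemma extend_graph_scaleR:
  assumes "\<And>x a. (x, a) \<in> M \<Longrightarrow> (r *\<^sub>R x, r * a) \<in> M" and "(z, v) \<in> extend_graph M y c"
  shows "(r *\<^sub>R z, r * v) \<in> extend_graph M y c"
proof -
  obtain x a t where "(x, a) \<in> M" "z = x + t *\<^sub>R y" "v = a + t * c"
    using assms(2) unfolding extend_graph_def by blast
  moreover from this have "(r *\<^sub>R x, r * a) \<in> M"
    using assms(1) by blast
  ultimately show ?thesis
    unfolding extend_graph_def
    by (intro CollectI exI[of _ "r *\<^sub>R x"] exI[of _ "r * a"] exI[of _ "r * t"] conjI)
      (simp_all add: algebra_simps)
qed

lemma extend_graph_unique:
  assumes M: "minorant_graph S p x0 M" and new: "\<And>a. (y, a) \<notin> M"
    and "(z, v) \<in> extend_graph M y c" "(z, v') \<in> extend_graph M y c"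
  shows "v = v'"
proof -
  obtain x a t x' a' t' where xa: "(x, a) \<in> M" "(x', a') \<in> M"
    and z: "z = x + t *\<^sub>R y" "z = x' + t' *\<^sub>R y" and v: "v = a + t * c" "v' = a' + t' * c"
    using assms(3,4) unfolding extend_graph_def by blast
  show ?thesis
  proof (cases "t = t'")
    case True
    then show ?thesis
      using z v minorant_graph_unique[OF M xa(1)] xa(2) by simp
  next
    case False
    have "((1 / (t - t')) *\<^sub>R (x' + (- 1) *\<^sub>R x), (1 / (t - t')) * (a' + (- 1) * a)) \<in> M"
      using xa by (intro minorant_graph_scaleR[OF M] minorant_graph_add[OF M]) simp_all
    moreover have "x' + (- 1) *\<^sub>R x = (t - t') *\<^sub>R y"
      using z by (simp add: scaleR_diff_left eq_diff_eq algebra_simps)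
    ultimately show ?thesis
      using new False by simp
  qed
qed

locale sublinear_on =
  fixes S :: "'v::real_vector set" and p :: "'v \<Rightarrow> real"
  assumes subspace: "subspace S"
    and subadditive: "x \<in> S \<Longrightarrow> y \<in> S \<Longrightarrow> p (x + y) \<le> p x + p y"
    and pos_homogeneous: "x \<in> S \<Longrightarrow> 0 < t \<Longrightarrow> p (t *\<^sub>R x) = t * p x"
begin

lemma zero: "p 0 = 0"
  using pos_homogeneous[OF subspace_0[OF subspace], of 2] by simp

lemma scaleR_ge:
  assumes x: "x \<in> S"
  shows "t * p x \<le> p (t *\<^sub>R x)"
proof (cases t "0 :: real" rule: linorder_cases)
  case less
  have "0 \<le> p x + p (- x)"
    using subadditive[OF x subspace_neg[OF subspace x]] zero by simp
  with less have "t * (p x + p (- x)) \<le> 0"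
    by (intro mult_nonpos_nonneg) simp_all
  moreover have "p (t *\<^sub>R x) = - t * p (- x)"
    using pos_homogeneous[OF subspace_neg[OF subspace x], of "- t"] less by simp
  ultimately show ?thesis
    by (simp add: algebra_simps)
qed (simp_all add: zero pos_homogeneous[OF x])

lemma minorant_graph_line:
  assumes x0: "x0 \<in> S"
  shows "minorant_graph S p x0 {(t *\<^sub>R x0, t * p x0) | t. True}"
  unfolding minorant_graph_def
proof (intro conjI allI impI)
  show "(x0, p x0) \<in> {(t *\<^sub>R x0, t * p x0) | t. True}"
    by (auto intro: exI[of _ 1])
  show "x \<in> S" if "(x, a) \<in> {(t *\<^sub>R x0, t * p x0) | t. True}" for x a
    using that x0 subspace_scale[OF subspace] by auto
  show "a \<le> p x" if "(x, a) \<in> {(t *\<^sub>R x0, t * p x0) | t. True}" for x a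
    using that x0 scaleR_ge by auto
  show "(x + y, a + b) \<in> {(t *\<^sub>R x0, t * p x0) | t. True}"
    if "(x, a) \<in> {(t *\<^sub>R x0, t * p x0) | t. True}" "(y, b) \<in> {(t *\<^sub>R x0, t * p x0) | t. True}" for x a y b
  proof -
    from that obtain t s where "x = t *\<^sub>R x0" "a = t * p x0" "y = s *\<^sub>R x0" "b = s * p x0"
      by blast
    then show ?thesis
      by (auto intro!: exI[of _ "t + s"] simp: algebra_simps)
  qed
  show "(t *\<^sub>R x, t * a) \<in> {(t *\<^sub>R x0, t * p x0) | t. True}"
    if "(x, a) \<in> {(t *\<^sub>R x0, t * p x0) | t. True}" for x a t
  proof -
    from that obtain s where "x = s *\<^sub>R x0" "a = s * p x0"
      by blast
    then show ?thesis
      by (auto intro!: exI[of _ "t * s"])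
  qed
  show "a = b"
    if "(x, a) \<in> {(t *\<^sub>R x0, t * p x0) | t. True}" "(x, b) \<in> {(t *\<^sub>R x0, t * p x0) | t. True}" for x a b
    using that zero by (cases "x0 = 0") (auto simp: scaleR_cancel_right)
qed

lemma minorant_graph_Union:
  assumes "C \<noteq> {}" "\<And>G. G \<in> C \<Longrightarrow> minorant_graph S p x0 G"
    and chain: "\<And>G H. G \<in> C \<Longrightarrow> H \<in> C \<Longrightarrow> G \<subseteq> H \<or> H \<subseteq> G"
  shows "minorant_graph S p x0 (\<Union>C)"
  unfolding minorant_graph_def
proof (intro conjI allI impI)
  show "(x0, p x0) \<in> \<Union>C"
    using assms(1,2) minorant_graph_x0 by blast
  show "x \<in> S" if "(x, a) \<in> \<Union>C" for x a
    using that assms(2) minorant_graph_in by blast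
  show "a \<le> p x" if "(x, a) \<in> \<Union>C" for x a
    using that assms(2) minorant_graph_le by blast
  show "(t *\<^sub>R x, t * a) \<in> \<Union>C" if "(x, a) \<in> \<Union>C" for x a t
    using that assms(2) minorant_graph_scaleR by blast
  show "(x + y, a + b) \<in> \<Union>C" if xy: "(x, a) \<in> \<Union>C" "(y, b) \<in> \<Union>C" for x a y b
  proof -
    obtain G H where "G \<in> C" "H \<in> C" "(x, a) \<in> G" "(y, b) \<in> H"
      using xy by blast
    with chain[of G H] show ?thesis
      using assms(2) minorant_graph_add by blast
  qed
  show "a = b" if xx: "(x, a) \<in> \<Union>C" "(x, b) \<in> \<Union>C" for x a b
  proof -
    obtain G H where "G \<in> C" "H \<in> C" "(x, a) \<in> G" "(x, b) \<in> H"
      using xx by blast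
    with chain[of G H] show ?thesis
      using assms(2) minorant_graph_unique by blast
  qed
qed

lemma extension_constant:
  assumes M: "minorant_graph S p x0 M" and y: "y \<in> S"
  obtains c where "\<And>x a. (x, a) \<in> M \<Longrightarrow> a - p (x - y) \<le> c"
    and "\<And>z b. (z, b) \<in> M \<Longrightarrow> c \<le> p (z + y) - b"
proof -
  let ?L = "{a - p (x - y) | x a. (x, a) \<in> M}"
  have gap: "l \<le> p (z + y) - b" if l: "l \<in> ?L" and zb: "(z, b) \<in> M" for l z b
  proof -
    obtain x a where xa: "l = a - p (x - y)" "(x, a) \<in> M"
      using l by blast
    have "a + b \<le> p ((x - y) + (z + y))"
      using minorant_graph_le[OF M minorant_graph_add[OF M xa(2) zb]] by simp
    also have "\<dots> \<le> p (x - y) + p (z + y)"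
      using minorant_graph_in[OF M xa(2)] minorant_graph_in[OF M zb] y
      by (intro subadditive subspace_diff[OF subspace] subspace_add[OF subspace])
    finally show ?thesis
      by (simp add: xa(1))
  qed
  have "?L \<noteq> {}"
    using minorant_graph_zero[OF M] by blast
  moreover have "bdd_above ?L"
    using gap[OF _ minorant_graph_zero[OF M]] by (rule bdd_aboveI)
  ultimately show ?thesis
    using gap by (intro that[of "Sup ?L"] cSup_upper cSup_least) blast+
qed

lemma extend_graph_dominated:
  assumes M: "minorant_graph S p x0 M" and y: "y \<in> S"
    and lower: "\<And>x a. (x, a) \<in> M \<Longrightarrow> a - p (x - y) \<le> c"
    and upper: "\<And>z b. (z, b) \<in> M \<Longrightarrow> c \<le> p (z + y) - b"
    and xa: "(x, a) \<in> M"
  shows "a + t * c \<le> p (x + t *\<^sub>R y)"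
proof (cases t "0 :: real" rule: linorder_cases)
  case less
  define s where "s = - t"
  have "s > 0"
    using less by (simp add: s_def)
  have "(1 / s) * a - p ((1 / s) *\<^sub>R x - y) \<le> c"
    using lower[OF minorant_graph_scaleR[OF M xa]] .
  then have "a - s * p ((1 / s) *\<^sub>R x - y) \<le> s * c"
    using \<open>s > 0\<close> by (simp add: field_simps)
  moreover have "(1 / s) *\<^sub>R x - y \<in> S"
    using minorant_graph_in[OF M xa] y by (intro subspace_diff[OF subspace] subspace_scale[OF subspace])
  then have "s * p ((1 / s) *\<^sub>R x - y) = p (s *\<^sub>R ((1 / s) *\<^sub>R x - y))"
    using \<open>s > 0\<close> by (simp add: pos_homogeneous)
  also have "s *\<^sub>R ((1 / s) *\<^sub>R x - y) = x + t *\<^sub>R y"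
    using \<open>s > 0\<close> by (simp add: s_def algebra_simps)
  ultimately show ?thesis
    by (simp add: s_def)
next
  case equal
  then show ?thesis
    using minorant_graph_le[OF M xa] by simp
next
  case greater
  have "c \<le> p ((1 / t) *\<^sub>R x + y) - (1 / t) * a"
    using upper[OF minorant_graph_scaleR[OF M xa]] .
  then have "t * c \<le> t * p ((1 / t) *\<^sub>R x + y) - a"
    using greater by (simp add: field_simps)
  moreover have "(1 / t) *\<^sub>R x + y \<in> S"
    using minorant_graph_in[OF M xa] y by (intro subspace_add[OF subspace] subspace_scale[OF subspace])
  then have "t * p ((1 / t) *\<^sub>R x + y) = p (t *\<^sub>R ((1 / t) *\<^sub>R x + y))"
    using greater by (simp add: pos_homogeneous)
  also have "t *\<^sub>R ((1 / t) *\<^sub>R x + y) = x + t *\<^sub>R y"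
    using greater by (simp add: algebra_simps)
  ultimately show ?thesis
    by simp
qed

lemma minorant_graph_extend_graph:
  assumes M: "minorant_graph S p x0 M" and y: "y \<in> S" and new: "\<And>a. (y, a) \<notin> M"
    and lower: "\<And>x a. (x, a) \<in> M \<Longrightarrow> a - p (x - y) \<le> c"
    and upper: "\<And>z b. (z, b) \<in> M \<Longrightarrow> c \<le> p (z + y) - b"
  shows "minorant_graph S p x0 (extend_graph M y c)"
  unfolding minorant_graph_def
proof (intro conjI allI impI)
  show "(x0, p x0) \<in> extend_graph M y c"
    using minorant_graph_x0[OF M] by (force simp: extend_graph_def)
  show "z \<in> S" if "(z, v) \<in> extend_graph M y c" for z v
    using that y minorant_graph_in[OF M] subspace_add[OF subspace] subspace_scale[OF subspace]
    by (force simp: extend_graph_def)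
  show "v \<le> p z" if "(z, v) \<in> extend_graph M y c" for z v
    using that extend_graph_dominated[OF M y lower upper] by (force simp: extend_graph_def)
  show "(z + z', v + v') \<in> extend_graph M y c"
    if "(z, v) \<in> extend_graph M y c" "(z', v') \<in> extend_graph M y c" for z v z' v'
    using minorant_graph_add[OF M] that by (rule extend_graph_add)
  show "(r *\<^sub>R z, r * v) \<in> extend_graph M y c" if "(z, v) \<in> extend_graph M y c" for z v r
    using minorant_graph_scaleR[OF M] that by (rule extend_graph_scaleR)
  show "v = v'" if "(z, v) \<in> extend_graph M y c" "(z, v') \<in> extend_graph M y c" for z v v'
    using M new that by (rule extend_graph_unique)
qed

lemma minorant_graph_extend:
  assumes M: "minorant_graph S p x0 M" and y: "y \<in> S" and new: "\<And>a. (y, a) \<notin> M"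
  shows "\<exists>M' c. minorant_graph S p x0 M' \<and> M \<subseteq> M' \<and> (y, c) \<in> M'"
proof -
  obtain c where "\<And>x a. (x, a) \<in> M \<Longrightarrow> a - p (x - y) \<le> c"
    and "\<And>z b. (z, b) \<in> M \<Longrightarrow> c \<le> p (z + y) - b"
    using extension_constant[OF M y] by blast
  then have "minorant_graph S p x0 (extend_graph M y c)"
    by (rule minorant_graph_extend_graph[OF M y new])
  moreover have "M \<subseteq> extend_graph M y c"
    unfolding extend_graph_def by (force intro: exI[of _ 0])
  moreover have "(y, c) \<in> extend_graph M y c"
    using minorant_graph_zero[OF M] unfolding extend_graph_def by (force intro: exI[of _ 1])
  ultimately show ?thesis
    by blast
qed

theorem Hahn_Banach:
  assumes x0: "x0 \<in> S"
  obtains f where "\<And>x y. x \<in> S \<Longrightarrow> y \<in> S \<Longrightarrow> f (x + y) = f x + f y"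
    and "\<And>t x. x \<in> S \<Longrightarrow> f (t *\<^sub>R x) = t * f x"
    and "\<And>x. x \<in> S \<Longrightarrow> f x \<le> p x" and "f x0 = p x0"
proof -
  let ?A = "{G. minorant_graph S p x0 G}"
  have "\<exists>M\<in>?A. \<forall>G\<in>?A. M \<subseteq> G \<longrightarrow> G = M"
  proof (rule Zorn_Lemma2, intro ballI)
    fix C assume "C \<in> Zorn.chains ?A"
    then have C: "\<And>G. G \<in> C \<Longrightarrow> minorant_graph S p x0 G"
      and chain: "\<And>G H. G \<in> C \<Longrightarrow> H \<in> C \<Longrightarrow> G \<subseteq> H \<or> H \<subseteq> G"
      unfolding Zorn.chains_def chain_subset_def by auto
    show "\<exists>U\<in>?A. \<forall>G\<in>C. G \<subseteq> U"
    proof (cases "C = {}")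
      case True
      then show ?thesis
        using minorant_graph_line[OF x0] by blast
    next
      case False
      then have "minorant_graph S p x0 (\<Union>C)"
        using C chain by (rule minorant_graph_Union)
      then show ?thesis
        by blast
    qed
  qed
  then obtain M where M: "minorant_graph S p x0 M"
    and maximal: "\<And>G. minorant_graph S p x0 G \<Longrightarrow> M \<subseteq> G \<Longrightarrow> G = M"
    by blast
  have total: "\<exists>a. (x, a) \<in> M" if x: "x \<in> S" for x
  proof (rule ccontr)
    assume "\<nexists>a. (x, a) \<in> M"
    then obtain M' c where "minorant_graph S p x0 M'" "M \<subseteq> M'" "(x, c) \<in> M'"
      using minorant_graph_extend[OF M x] by blast
    with maximal \<open>\<nexists>a. (x, a) \<in> M\<close> show False
      by blast
  qed
  define f where "f x = (THE a. (x, a) \<in> M)" for x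
  have f_eq: "f x = a" if "(x, a) \<in> M" for x a
    unfolding f_def by (rule the_equality) (use that minorant_graph_unique[OF M] in blast)+
  have f: "(x, f x) \<in> M" if "x \<in> S" for x
    using total[OF that] f_eq by blast
  show ?thesis
  proof (rule that)
    show "f (x + y) = f x + f y" if "x \<in> S" "y \<in> S" for x y
      using f_eq minorant_graph_add[OF M f f] that by blast
    show "f (t *\<^sub>R x) = t * f x" if "x \<in> S" for t x
      using f_eq minorant_graph_scaleR[OF M f] that by blast
    show "f x \<le> p x" if "x \<in> S" for x
      using minorant_graph_le[OF M f] that .
    show "f x0 = p x0"
      using f_eq minorant_graph_x0[OF M] .
  qed
qed

end

section \<open>Chains, difference chains and forms\<close>

lemma kvectors_eq_span: "kvectors k = span (wedge ` {w. length w = k})"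
proof -
  have eq: "(\<Sum>i<n. c i *\<^sub>R wedge (w i)) = (\<lambda>I. \<Sum>i<n. c i * wedge (w i) I)" for n :: nat and c w
    by (simp add: fun_eq_iff sum_fun_apply)
  show ?thesis
    unfolding kvectors_def span_image_eq_indexed_sums eq by blast
qed

definition diffchain :: "'a::euclidean_space list \<Rightarrow> 'a \<Rightarrow> 'a list \<Rightarrow> 'a chain" where
  "diffchain U p w = deltas U (mono p (wedge w))"

lemma Ddiff_eq_span:
  "Ddiff k j = span {diffchain U p w | U p w. length U = j \<and> length w = k}"
  (is "_ = span ?G")
proof (intro antisym subsetI)
  fix D :: "'a chain" assume "D \<in> Ddiff k j"
  then obtain n :: nat and c U p w where lengths: "\<forall>i<n. length (U i) = j \<and> length (w i) = k"
    and "D = (\<lambda>q I. \<Sum>i<n. c i * deltas (U i) (mono (p i) (wedge (w i))) q I)"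
    unfolding Ddiff_def by blast
  then have D: "D = (\<Sum>i<n. c i *\<^sub>R diffchain (U i) (p i) (w i))"
    by (simp add: fun_eq_iff sum_fun_apply diffchain_def)
  have "diffchain (U i) (p i) (w i) \<in> ?G" if "i < n" for i
    using lengths that by blast
  then show "D \<in> span ?G"
    unfolding D by (auto intro!: span_sum simp: span_scale span_base)
next
  fix D :: "'a chain" assume "D \<in> span ?G"
  moreover have "?G = (\<lambda>(U, p, w). diffchain U p w) ` {(U, p, w). length U = j \<and> length w = k}"
    by (auto simp: image_iff) blast
  ultimately have "D \<in> span ((\<lambda>(U, p, w). diffchain U p w) ` {(U, p, w). length U = j \<and> length w = k})"
    by simp
  then obtain n :: nat and c x where D: "D = (\<Sum>i<n. c i *\<^sub>R (case x i of (U, p, w) \<Rightarrow> diffchain U p w))"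
    and x: "\<forall>i<n. x i \<in> {(U, p, w). length U = j \<and> length w = k}"
    unfolding span_image_eq_indexed_sums by blast
  define U where "U i = fst (x i)" for i
  define p where "p i = fst (snd (x i))" for i
  define w where "w i = snd (snd (x i))" for i
  have "x i = (U i, p i, w i)" for i
    by (simp add: U_def p_def w_def)
  with x D have "\<forall>i<n. length (U i) = j \<and> length (w i) = k"
    and "D = (\<lambda>q I. \<Sum>i<n. c i * deltas (U i) (mono (p i) (wedge (w i))) q I)"
    by (auto simp: fun_eq_iff sum_fun_apply diffchain_def)
  then show "D \<in> Ddiff k j"
    unfolding Ddiff_def by blast
qed

lemma deltas_Nil [simp]: "deltas [] P = P"
  and deltas_Cons [simp]: "deltas (u # U) P = delta u (deltas U P)"
  by (simp_all add: deltas_def)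

lemma delta_eq: "delta u P = transl u P - P"
  by (simp add: delta_def fun_eq_iff)

lemma linear_mono: "linear (mono p)"
  by (rule linearI) (auto simp: mono_def fun_eq_iff)

lemma deltas_scaleR: "deltas U (c *\<^sub>R P) = c *\<^sub>R deltas U P"
  by (induction U) (simp_all add: delta_def transl_def fun_eq_iff algebra_simps)

lemma mono_0 [simp]: "mono p 0 = 0"
  by (simp add: mono_def fun_eq_iff)

lemma mono_scaleR: "mono p (c *\<^sub>R \<alpha>) = c *\<^sub>R mono p \<alpha>"
  by (simp add: mono_def fun_eq_iff)

lemma deltas_0 [simp]: "deltas U 0 = 0"
  using deltas_scaleR[of U 0 0] by simp

lemma deltas_eq_0_if_0_in_set: "0 \<in> set U \<Longrightarrow> deltas U P = 0"
  by (induction U) (auto simp: delta_def transl_def fun_eq_iff)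

lemma chains_iff: "P \<in> chains k \<longleftrightarrow> finite {p. P p \<noteq> 0} \<and> (\<forall>p. P p \<in> kvectors k)"
  by (simp add: chains_def zero_fun_def)

lemma subspace_chains: "subspace (chains k)"
proof (rule subspaceI)
  have kv: "subspace (kvectors k)"
    by (simp add: kvectors_eq_span)
  show "0 \<in> chains k"
    using subspace_0[OF kv] by (simp add: chains_iff)
  show "P + Q \<in> chains k" if "P \<in> chains k" "Q \<in> chains k" for P Q
  proof -
    have "{p. (P + Q) p \<noteq> 0} \<subseteq> {p. P p \<noteq> 0} \<union> {p. Q p \<noteq> 0}"
      by auto
    with that show ?thesis
      by (auto simp: chains_iff intro: finite_subset subspace_add[OF kv])
  qed
  show "c *\<^sub>R P \<in> chains k" if "P \<in> chains k" for c P
  proof -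
    have "{p. (c *\<^sub>R P) p \<noteq> 0} \<subseteq> {p. P p \<noteq> 0}"
      by auto
    with that show ?thesis
      by (auto simp: chains_iff intro: finite_subset subspace_scale[OF kv])
  qed
qed

lemma zero_in_chains: "0 \<in> chains k"
  by (rule subspace_0[OF subspace_chains])

lemma mono_in_chains: "\<alpha> \<in> kvectors k \<Longrightarrow> mono (p :: 'a::euclidean_space) \<alpha> \<in> chains k"
proof -
  assume \<alpha>: "\<alpha> \<in> kvectors k"
  have "{q. mono p \<alpha> q \<noteq> 0} \<subseteq> {p}"
    by (simp add: mono_def subset_eq zero_fun_def)
  then have "finite {q. mono p \<alpha> q \<noteq> 0}"
    by (rule finite_subset) simp
  moreover have "0 \<in> (kvectors k :: ('a list \<Rightarrow> real) set)"
    by (simp add: kvectors_eq_span span_zero)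
  then have "mono p \<alpha> q \<in> kvectors k" for q
    using \<alpha> by (simp add: mono_def zero_fun_def)
  ultimately show ?thesis
    by (simp add: chains_iff)
qed

lemma transl_in_chains: "P \<in> chains k \<Longrightarrow> transl u P \<in> chains k"
proof -
  assume P: "P \<in> chains k"
  have "{q. transl u P q \<noteq> 0} = (\<lambda>q. q - u) -` {q. P q \<noteq> 0}"
    by (simp add: transl_def)
  also have "finite \<dots>"
    using P by (intro finite_vimageI) (simp_all add: chains_iff inj_on_def)
  finally show ?thesis
    using P by (simp add: chains_iff transl_def)
qed

lemma deltas_in_chains: "P \<in> chains k \<Longrightarrow> deltas U P \<in> chains k"
  by (induction U) (auto simp: delta_eq intro: subspace_diff[OF subspace_chains] transl_in_chains)

lemma diffchain_in_chains: "length w = k \<Longrightarrow> diffchain U p w \<in> chains k"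
  unfolding diffchain_def
  by (intro deltas_in_chains mono_in_chains) (simp add: kvectors_eq_span span_base)

lemma subspace_Ddiff: "subspace (Ddiff k j)"
  by (simp add: Ddiff_eq_span)

lemma zero_in_Ddiff: "0 \<in> Ddiff k j"
  by (rule subspace_0[OF subspace_Ddiff])

lemma Ddiff_subset_chains: "Ddiff k j \<subseteq> chains k"
  unfolding Ddiff_eq_span by (rule span_minimal[OF _ subspace_chains]) (auto intro: diffchain_in_chains)

lemma Ddiff_in_chains: "X \<in> Ddiff k j \<Longrightarrow> X \<in> chains k"
  using Ddiff_subset_chains by (rule subsetD)

lemma chain_eq_sum_mono:
  assumes "finite {p. P p \<noteq> 0}"
  shows "P = (\<Sum>p | P p \<noteq> 0. mono p (P p))"
proof
  fix q
  have "(\<Sum>p | P p \<noteq> 0. mono p (P p)) q = (\<Sum>p | P p \<noteq> 0. mono p (P p) q)"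
    by (rule sum_fun_apply)
  also have "\<dots> = (\<Sum>p | P p \<noteq> 0. if p = q then P q else 0)"
    by (rule sum.cong) (simp_all add: mono_def zero_fun_def)
  also have "\<dots> = P q"
    using assms by (simp add: sum.delta')
  finally show "P q = (\<Sum>p | P p \<noteq> 0. mono p (P p)) q" ..
qed

lemma chains_subset_Ddiff0: "chains k \<subseteq> Ddiff k 0"
proof
  fix P :: "'a chain" assume P: "P \<in> chains k"
  have mono_P: "mono p (P p) \<in> Ddiff k 0" for p
  proof -
    have "mono p (P p) \<in> mono p ` span (wedge ` {w. length w = k})"
      using P by (simp add: chains_iff kvectors_eq_span)
    also have "\<dots> = span (mono p ` wedge ` {w. length w = k})"
      by (simp add: span_linear_image linear_mono)
    also have "\<dots> \<subseteq> Ddiff k 0"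
    proof (unfold Ddiff_eq_span, rule span_mono, rule subsetI)
      fix X assume "X \<in> mono p ` wedge ` {w. length w = k}"
      then obtain w where "length w = k" "X = diffchain [] p w"
        by (auto simp: diffchain_def)
      then show "X \<in> {diffchain U p w | U p w. length U = 0 \<and> length w = k}"
        by blast
    qed
    finally show ?thesis .
  qed
  have "P = (\<Sum>p | P p \<noteq> 0. mono p (P p))"
    using P by (simp add: chains_iff chain_eq_sum_mono)
  also have "\<dots> \<in> Ddiff k 0"
    using subspace_Ddiff by (rule subspace_sum) (rule mono_P)
  finally show "P \<in> Ddiff k 0" .
qed

lemma chain_in_Ddiff0: "P \<in> chains k \<Longrightarrow> P \<in> Ddiff k 0"
  using chains_subset_Ddiff0 by (rule subsetD)

lemma cadd_eq_plus: "cadd P Q = P + Q"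
  by (simp add: cadd_def fun_eq_iff)

lemma cscale_eq_scaleR: "cscale c P = c *\<^sub>R P"
  by (simp add: cscale_def fun_eq_iff)

lemma kform_iff: "kform k \<Omega> \<longleftrightarrow>
    (\<forall>P\<in>chains k. \<forall>Q\<in>chains k. \<Omega> (P + Q) = \<Omega> P + \<Omega> Q) \<and> (\<forall>c. \<forall>P\<in>chains k. \<Omega> (c *\<^sub>R P) = c * \<Omega> P)"
  by (simp add: kform_def cadd_eq_plus cscale_eq_scaleR)

lemma kform_add: "kform k \<Omega> \<Longrightarrow> P \<in> chains k \<Longrightarrow> Q \<in> chains k \<Longrightarrow> \<Omega> (P + Q) = \<Omega> P + \<Omega> Q"
  and kform_scaleR: "kform k \<Omega> \<Longrightarrow> P \<in> chains k \<Longrightarrow> \<Omega> (c *\<^sub>R P) = c * \<Omega> P"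
  by (simp_all add: kform_iff)

lemma kform_zero: "kform k \<Omega> \<Longrightarrow> \<Omega> 0 = 0"
  using kform_scaleR[of k \<Omega> 0 0] zero_in_chains[of k] by simp

lemma kform_sum:
  "kform k \<Omega> \<Longrightarrow> (\<And>i. i \<in> A \<Longrightarrow> D i \<in> chains k) \<Longrightarrow> \<Omega> (\<Sum>i\<in>A. D i) = (\<Sum>i\<in>A. \<Omega> (D i))"
  by (induction A rule: infinite_finite_induct)
    (auto simp: kform_zero kform_add subspace_sum[OF subspace_chains])

lemma kform_span_bound:
  assumes "X \<in> span B" "B \<subseteq> chains k"
    and "\<And>b. b \<in> B \<Longrightarrow> \<exists>c. \<forall>\<Omega>\<in>F. \<bar>\<Omega> b\<bar> \<le> c * N \<Omega>"
    and "\<And>\<Omega>. \<Omega> \<in> F \<Longrightarrow> kform k \<Omega>"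
  obtains C where "\<And>\<Omega>. \<Omega> \<in> F \<Longrightarrow> \<bar>\<Omega> X\<bar> \<le> C * N \<Omega>"
proof -
  from assms(1) have "X \<in> chains k \<and> (\<exists>C. \<forall>\<Omega>\<in>F. \<bar>\<Omega> X\<bar> \<le> C * N \<Omega>)"
  proof (induction rule: span_induct_alt)
    case base
    have "\<forall>\<Omega>\<in>F. \<bar>\<Omega> 0\<bar> \<le> 0 * N \<Omega>"
      using kform_zero[OF assms(4)] by simp
    then show ?case
      using zero_in_chains by blast
  next
    case (step c b Y)
    obtain cb where cb: "\<forall>\<Omega>\<in>F. \<bar>\<Omega> b\<bar> \<le> cb * N \<Omega>"
      using assms(3)[OF step.hyps(1)] by blast
    obtain CY where CY: "\<forall>\<Omega>\<in>F. \<bar>\<Omega> Y\<bar> \<le> CY * N \<Omega>" and Y: "Y \<in> chains k"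
      using step.IH by blast
    have b: "b \<in> chains k"
      using step.hyps(1) assms(2) by blast
    have "\<bar>\<Omega> (c *\<^sub>R b + Y)\<bar> \<le> (\<bar>c\<bar> * cb + CY) * N \<Omega>" if "\<Omega> \<in> F" for \<Omega>
    proof -
      have "\<bar>\<Omega> (c *\<^sub>R b + Y)\<bar> \<le> \<bar>c\<bar> * \<bar>\<Omega> b\<bar> + \<bar>\<Omega> Y\<bar>"
        using assms(4)[OF that] b Y
        by (simp add: kform_add kform_scaleR subspace_scale[OF subspace_chains] flip: abs_mult)
      also have "\<dots> \<le> \<bar>c\<bar> * (cb * N \<Omega>) + CY * N \<Omega>"
        using cb CY that by (intro add_mono mult_left_mono) auto
      finally show ?thesis
        by (simp add: algebra_simps)
    qed
    moreover have "c *\<^sub>R b + Y \<in> chains k"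
      using subspace_add[OF subspace_chains subspace_scale[OF subspace_chains b] Y] .
    ultimately show ?case
      by blast
  qed
  then show ?thesis
    using that by blast
qed

section \<open>Gram determinants\<close>

lemma detk_eq_det: "detk n M = Determinant.det (Matrix.mat n n (\<lambda>(a, b). M a b))"
  unfolding detk_def det_def by (simp add: lessThan_atLeast0)

lemma detk_0 [simp]: "detk 0 M = 1"
  by (simp add: detk_def)

lemma detk_transpose: "detk n (\<lambda>a b. M b a) = detk n M"
proof -
  have "Matrix.mat n n (\<lambda>(a, b). M b a) = transpose_mat (Matrix.mat n n (\<lambda>(a, b). M a b))"
    by (auto simp: Matrix.mat_eq_iff)
  then show ?thesis
    unfolding detk_eq_det by (simp add: det_transpose[of _ n])
qed

lemma detk_identity: "detk n (\<lambda>a b. if a = b then 1 else 0) = 1"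
proof -
  have "Matrix.mat n n (\<lambda>(a, b). if a = b then 1 else 0) = (1\<^sub>m n :: real Matrix.mat)"
    by (auto simp: Matrix.mat_eq_iff)
  then show ?thesis
    unfolding detk_eq_det by simp
qed

lemma detk_eq_0_iff_kernel:
  "detk n M = 0 \<longleftrightarrow> (\<exists>v. (\<exists>a<n. v a \<noteq> 0) \<and> (\<forall>a<n. (\<Sum>b<n. M a b * v b) = 0))"
proof -
  let ?A = "Matrix.mat n n (\<lambda>(a, b). M a b) :: real Matrix.mat"
  have "(\<exists>v. v \<in> carrier_vec n \<and> v \<noteq> 0\<^sub>v n \<and> ?A *\<^sub>v v = 0\<^sub>v n) \<longleftrightarrow>
      (\<exists>v. (\<exists>a<n. v a \<noteq> 0) \<and> (\<forall>a<n. (\<Sum>b<n. M a b * v b) = 0))"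
  proof
    assume "\<exists>v. v \<in> carrier_vec n \<and> v \<noteq> 0\<^sub>v n \<and> ?A *\<^sub>v v = 0\<^sub>v n"
    then obtain v where "v \<in> carrier_vec n" "v \<noteq> 0\<^sub>v n" "?A *\<^sub>v v = 0\<^sub>v n"
      by blast
    then show "\<exists>v. (\<exists>a<n. v a \<noteq> 0) \<and> (\<forall>a<n. (\<Sum>b<n. M a b * v b) = 0)"
      by (intro exI[of _ "vec_index v"])
        (auto simp: vec_eq_iff scalar_prod_def lessThan_atLeast0 dest!: arg_cong[of _ _ "\<lambda>u. vec_index u _"])
  next
    assume "\<exists>v. (\<exists>a<n. v a \<noteq> 0) \<and> (\<forall>a<n. (\<Sum>b<n. M a b * v b) = 0)"
    then obtain v where "\<exists>a<n. v a \<noteq> 0" "\<forall>a<n. (\<Sum>b<n. M a b * v b) = 0"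
      by blast
    then show "\<exists>v. v \<in> carrier_vec n \<and> v \<noteq> 0\<^sub>v n \<and> ?A *\<^sub>v v = 0\<^sub>v n"
      by (intro exI[of _ "Matrix.vec n v"]) (auto simp: vec_eq_iff scalar_prod_def lessThan_atLeast0)
  qed
  then show ?thesis
    unfolding detk_eq_det by (simp add: det_0_iff_vec_prod_zero_field[of ?A n])
qed

lemma detk_scale_rows_cols:
  "detk n (\<lambda>a b. f a * g b * M a b) = (\<Prod>a<n. f a) * (\<Prod>b<n. g b) * detk n M"
proof -
  have "(\<Prod>a<n. f a * g (\<sigma> a) * M a (\<sigma> a)) = (\<Prod>a<n. f a) * (\<Prod>b<n. g b) * (\<Prod>a<n. M a (\<sigma> a))"
    if "\<sigma> permutes {..<n}" for \<sigma>
    using prod.permute[OF that, of g] by (simp add: prod.distrib comp_def)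
  then show ?thesis
    unfolding detk_def sum_distrib_left by (intro sum.cong refl) (simp add: algebra_simps)
qed

definition gram :: "'a::real_inner list \<Rightarrow> nat \<Rightarrow> nat \<Rightarrow> real" where
  "gram w a b = inner (w ! a) (w ! b)"

lemma mass_eq_gram: "mass w = sqrt (detk (length w) (gram w))"
  by (simp add: mass_def gram_def[abs_def])

lemma gram_kernel_imp_combination_0:
  assumes "\<And>a. a < length w \<Longrightarrow> (\<Sum>b<length w. gram w a b * v b) = 0"
  shows "(\<Sum>b<length w. v b *\<^sub>R w ! b) = 0"
proof -
  let ?s = "\<Sum>b<length w. v b *\<^sub>R w ! b"
  have "inner ?s ?s = (\<Sum>a<length w. v a * inner (w ! a) ?s)"
    by (simp add: inner_sum_left)
  also have "\<dots> = 0"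
    using assms by (simp add: inner_sum_right gram_def mult.commute)
  finally show ?thesis
    by simp
qed

definition gram_path :: "'a::real_inner list \<Rightarrow> real \<Rightarrow> nat \<Rightarrow> nat \<Rightarrow> real" where
  "gram_path w s a b = (1 - s) * (if a = b then 1 else 0) + s * gram w a b"

lemma gram_path_nonsingular:
  assumes s: "0 \<le> s" "s < 1"
  shows "detk (length w) (gram_path w s) \<noteq> 0"
proof
  let ?n = "length w"
  assume "detk ?n (gram_path w s) = 0"
  then obtain v where v: "\<exists>a<?n. v a \<noteq> 0" "\<forall>a<?n. (\<Sum>b<?n. gram_path w s a b * v b) = 0"
    unfolding detk_eq_0_iff_kernel by blast
  let ?t = "\<Sum>b<?n. v b *\<^sub>R w ! b"
  have row: "(1 - s) * v a + s * inner (w ! a) ?t = 0" if "a < ?n" for a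
  proof -
    have "(\<Sum>b<?n. gram_path w s a b * v b) =
        (\<Sum>b<?n. (1 - s) * (if a = b then v b else 0) + s * (gram w a b * v b))"
      by (rule sum.cong) (simp_all add: gram_path_def algebra_simps)
    also have "\<dots> = (1 - s) * v a + s * inner (w ! a) ?t"
      using that by (simp add: sum.distrib flip: sum_distrib_left)
        (simp add: gram_def inner_sum_right mult.commute)
    finally show ?thesis
      using v(2) that by simp
  qed
  have "0 = (\<Sum>a<?n. v a * ((1 - s) * v a + s * inner (w ! a) ?t))"
    using row by simp
  also have "\<dots> = (\<Sum>a<?n. (1 - s) * (v a * v a) + s * (v a * inner (w ! a) ?t))"
    by (rule sum.cong) (simp_all add: algebra_simps)
  also have "\<dots> = (1 - s) * (\<Sum>a<?n. v a * v a) + s * inner ?t ?t"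
    by (simp add: sum.distrib inner_sum_left flip: sum_distrib_left)
  finally have eq: "(1 - s) * (\<Sum>a<?n. v a * v a) + s * inner ?t ?t = 0"
    by simp
  obtain a0 where a0: "a0 < ?n" "v a0 \<noteq> 0"
    using v(1) by blast
  have "0 < v a0 * v a0"
    using a0(2) not_real_square_gt_zero by blast
  then have "0 < (\<Sum>a<?n. v a * v a)"
    using a0(1) by (intro sum_pos2[of _ a0]) simp_all
  moreover have "0 \<le> s * inner ?t ?t"
    using s by simp
  ultimately show False
    using eq s(2) by (smt (verit) mult_pos_pos)
qed

(* The determinant along the path from the identity to the Gram matrix is 1 at s = 0 and
   never vanishes for s < 1, so it cannot be negative at s = 1. *)
lemma gram_det_nonneg: "0 \<le> detk (length w) (gram w)"
proof (rule ccontr)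
  let ?f = "\<lambda>s. detk (length w) (gram_path w s)"
  assume "\<not> 0 \<le> detk (length w) (gram w)"
  then have "?f 1 < 0"
    by (simp add: gram_path_def[abs_def] gram_def[abs_def])
  moreover have "?f 0 = 1"
    by (simp add: gram_path_def[abs_def] detk_identity)
  moreover have "continuous_on {0..1} ?f"
    unfolding gram_path_def detk_def by (intro continuous_intros)
  ultimately obtain s where "0 \<le> s" "s \<le> 1" "?f s = 0"
    using IVT2'[of ?f 1 0 0] by force
  moreover from this \<open>?f 1 < 0\<close> have "s < 1"
    by (cases "s = 1") auto
  ultimately show False
    using gram_path_nonsingular by blast
qed

lemma mass_nonneg: "0 \<le> mass w"
  by (simp add: mass_eq_gram gram_det_nonneg)

lemma wedge_eq_0_if_gram_singular:
  assumes "detk (length w) (gram w) = 0"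
  shows "wedge w = 0"
proof
  fix I
  show "wedge w I = 0 I"
  proof (cases "length I = length w")
    case True
    obtain v where v: "\<exists>a<length w. v a \<noteq> 0" "\<forall>a<length w. (\<Sum>b<length w. gram w a b * v b) = 0"
      using assms unfolding detk_eq_0_iff_kernel by blast
    have comb: "(\<Sum>a<length w. v a *\<^sub>R w ! a) = 0"
      using v(2) by (intro gram_kernel_imp_combination_0) simp
    have "(\<Sum>a<length w. inner (w ! a) (I ! b) * v a) = 0" for b
    proof -
      have "(\<Sum>a<length w. inner (w ! a) (I ! b) * v a) = inner (\<Sum>a<length w. v a *\<^sub>R w ! a) (I ! b)"
        by (simp add: inner_sum_left mult.commute)
      then show ?thesis
        by (simp add: comb)
    qed
    then have "detk (length w) (\<lambda>b a. inner (w ! a) (I ! b)) = 0"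
      using v(1) unfolding detk_eq_0_iff_kernel by blast
    then show ?thesis
      using True detk_transpose[of "length w" "\<lambda>a b. inner (w ! b) (I ! a)"] by (simp add: wedge_def)
  qed (simp add: wedge_def)
qed

lemma mass_eq_0_imp_wedge_eq_0: "mass w = 0 \<Longrightarrow> wedge w = 0"
  by (simp add: mass_eq_gram wedge_eq_0_if_gram_singular)

lemma mass_Nil [simp]: "mass [] = 1"
  by (simp add: mass_def)

definition scale_first :: "real \<Rightarrow> 'a::real_vector list \<Rightarrow> 'a list" where
  "scale_first t w = (t *\<^sub>R hd w) # tl w"

lemma length_scale_first [simp]: "w \<noteq> [] \<Longrightarrow> length (scale_first t w) = length w"
  by (cases w) (simp_all add: scale_first_def)

lemma nth_scale_first: "w \<noteq> [] \<Longrightarrow> scale_first t w ! a = (if a = 0 then t else 1) *\<^sub>R w ! a"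
  by (cases w; cases a) (simp_all add: scale_first_def)

lemma prod_if_0: "(\<Prod>a<n. if a = 0 then t else 1) = (if 0 < n then t else (1 :: real))" for n :: nat
  by (induction n) auto

lemma wedge_scale_first: "w \<noteq> [] \<Longrightarrow> wedge (scale_first t w) = t *\<^sub>R wedge w"
proof
  fix I assume w: "w \<noteq> []"
  have "detk (length w) (\<lambda>a b. inner (scale_first t w ! a) (I ! b))
      = detk (length w) (\<lambda>a b. (if a = 0 then t else 1) * 1 * inner (w ! a) (I ! b))"
    using w by (simp add: nth_scale_first)
  also have "\<dots> = t * detk (length w) (\<lambda>a b. inner (w ! a) (I ! b))"
    unfolding detk_scale_rows_cols using w by (simp add: prod_if_0)
  finally show "wedge (scale_first t w) I = (t *\<^sub>R wedge w) I"
    using w by (simp add: wedge_def)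
qed

lemma mass_scale_first: "w \<noteq> [] \<Longrightarrow> mass (scale_first t w) = \<bar>t\<bar> * mass w"
proof -
  assume w: "w \<noteq> []"
  have "detk (length w) (gram (scale_first t w))
      = detk (length w) (\<lambda>a b. (if a = 0 then t else 1) * (if b = 0 then t else 1) * gram w a b)"
    using w by (simp add: nth_scale_first gram_def[abs_def] algebra_simps)
  also have "\<dots> = (t * t) * detk (length w) (gram w)"
    unfolding detk_scale_rows_cols using w by (simp add: prod_if_0)
  finally show ?thesis
    using w by (simp add: mass_eq_gram real_sqrt_mult)
qed

section \<open>Norms of forms and of difference chains\<close>

lemma diffchain_eq_0_if_weight_0:
  assumes "prod_list (map norm U) * mass w = 0"
  shows "diffchain U p w = 0"
proof (cases "mass w = 0")
  case True
  then show ?thesis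
    by (simp add: diffchain_def mass_eq_0_imp_wedge_eq_0)
next
  case False
  with assms have "0 \<in> set U"
    by (auto simp: prod_list_zero_iff)
  then show ?thesis
    by (simp add: diffchain_def deltas_eq_0_if_0_in_set)
qed

lemma diffchain_scale_first: "w \<noteq> [] \<Longrightarrow> diffchain U p (scale_first t w) = t *\<^sub>R diffchain U p w"
  by (simp add: diffchain_def wedge_scale_first mono_scaleR deltas_scaleR)

definition unit_diffchains :: "nat \<Rightarrow> nat \<Rightarrow> 'a::euclidean_space chain set" where
  "unit_diffchains k j = {diffchain U p w | U p w.
     length U = j \<and> length w = k \<and> prod_list (map norm U) * mass w = 1}"

lemma formnorm_eq_SUP: "formnorm k j \<Omega> = (SUP X\<in>unit_diffchains k j. ennreal \<bar>\<Omega> X\<bar>)"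
  unfolding formnorm_def unit_diffchains_def diffchain_def
  by (rule arg_cong[where f = Sup]) blast

lemma formnorm_upper: "X \<in> unit_diffchains k j \<Longrightarrow> ennreal \<bar>\<Omega> X\<bar> \<le> formnorm k j \<Omega>"
  unfolding formnorm_eq_SUP by (rule SUP_upper)

lemma formnorm_least: "(\<And>X. X \<in> unit_diffchains k j \<Longrightarrow> ennreal \<bar>\<Omega> X\<bar> \<le> B) \<Longrightarrow> formnorm k j \<Omega> \<le> B"
  unfolding formnorm_eq_SUP by (rule SUP_least)

lemma abs_form_unit_le:
  "X \<in> unit_diffchains k j \<Longrightarrow> formnorm k j \<Omega> < Orderings.top \<Longrightarrow> \<bar>\<Omega> X\<bar> \<le> enn2real (formnorm k j \<Omega>)"
  using enn2real_mono[OF formnorm_upper] by simp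

lemma prod_list_norm_nonneg: "0 \<le> prod_list (map norm U)"
  by (induction U) simp_all

(* Delta_U is not homogeneous in the vectors of U, so a difference chain is normalised by
   rescaling the first vector of w; this needs w to be nonempty unless the weight is already 1. *)
lemma abs_form_diffchain_le:
  assumes \<Omega>: "kform k \<Omega>" "formnorm k j \<Omega> < Orderings.top" and lengths: "length U = j" "length w = k"
    and rescalable: "w \<noteq> [] \<or> U = []"
  shows "\<bar>\<Omega> (diffchain U p w)\<bar> \<le> prod_list (map norm U) * mass w * enn2real (formnorm k j \<Omega>)"
proof -
  define c where "c = prod_list (map norm U) * mass w"
  have "0 \<le> c"
    unfolding c_def by (simp add: mass_nonneg prod_list_norm_nonneg)
  consider "c = 0" | "w = []" | "0 < c" "w \<noteq> []"
    using \<open>0 \<le> c\<close> by linarith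
  then show ?thesis
  proof cases
    case 1
    then have "diffchain U p w = 0"
      by (simp add: c_def diffchain_eq_0_if_weight_0)
    then show ?thesis
      using 1 kform_zero[OF \<Omega>(1)] unfolding c_def[symmetric] by simp
  next
    case 2
    with rescalable lengths have "diffchain U p w \<in> unit_diffchains k j"
      by (auto simp: unit_diffchains_def)
    with 2 rescalable show ?thesis
      using abs_form_unit_le[OF _ \<Omega>(2)] by auto
  next
    case 3
    let ?w = "scale_first (1 / c) w"
    have "prod_list (map norm U) \<noteq> 0" "mass w \<noteq> 0"
      using 3(1) unfolding c_def by (auto simp del: prod_list_zero_iff)
    then have "prod_list (map norm U) * mass ?w = 1"
      using 3 by (simp add: mass_scale_first c_def del: prod_list_zero_iff)
    with 3 lengths have "diffchain U p ?w \<in> unit_diffchains k j"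
      unfolding unit_diffchains_def by fastforce
    then have "\<bar>\<Omega> ((1 / c) *\<^sub>R diffchain U p w)\<bar> \<le> enn2real (formnorm k j \<Omega>)"
      using abs_form_unit_le[OF _ \<Omega>(2)] 3 by (simp add: diffchain_scale_first)
    then have "\<bar>\<Omega> (diffchain U p w)\<bar> / c \<le> enn2real (formnorm k j \<Omega>)"
      using 3(1) kform_scaleR[OF \<Omega>(1) diffchain_in_chains[OF lengths(2)]] by (simp add: abs_mult)
    then show ?thesis
      using 3(1) unfolding c_def[symmetric] by (simp add: divide_le_eq ac_simps)
  qed
qed

lemma Dnorm_nonneg: "0 \<le> Dnorm k j X"
  unfolding Dnorm_def by (rule Sup_upper) simp

lemma Dnorm_ge:
  "kform k \<Omega> \<Longrightarrow> 0 < formnorm k j \<Omega> \<Longrightarrow> formnorm k j \<Omega> < Orderings.top \<Longrightarrow>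
    ereal (\<Omega> X / enn2real (formnorm k j \<Omega>)) \<le> Dnorm k j X"
  unfolding Dnorm_def by (intro Sup_upper insertI2) blast

lemma Dnorm_least:
  assumes "0 \<le> B"
    and "\<And>\<Omega>. kform k \<Omega> \<Longrightarrow> 0 < formnorm k j \<Omega> \<Longrightarrow> formnorm k j \<Omega> < Orderings.top \<Longrightarrow>
      ereal (\<Omega> X / enn2real (formnorm k j \<Omega>)) \<le> B"
  shows "Dnorm k j X \<le> B"
  unfolding Dnorm_def by (rule Sup_least) (use assms in auto)

lemma Dnorm_zero [simp]: "Dnorm k j 0 = 0"
  by (intro antisym Dnorm_least Dnorm_nonneg) (simp_all add: kform_zero)

lemma Dnorm_add:
  assumes "X \<in> chains k" "Y \<in> chains k"
  shows "Dnorm k j (X + Y) \<le> Dnorm k j X + Dnorm k j Y"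
proof (rule Dnorm_least)
  show "0 \<le> Dnorm k j X + Dnorm k j Y"
    by (simp add: Dnorm_nonneg)
  fix \<Omega> :: "'a chain \<Rightarrow> real" assume \<Omega>: "kform k \<Omega>" "0 < formnorm k j \<Omega>" "formnorm k j \<Omega> < Orderings.top"
  let ?F = "enn2real (formnorm k j \<Omega>)"
  have "ereal (\<Omega> (X + Y) / ?F) = ereal (\<Omega> X / ?F) + ereal (\<Omega> Y / ?F)"
    using kform_add[OF \<Omega>(1) assms] by (simp add: add_divide_distrib)
  also have "\<dots> \<le> Dnorm k j X + Dnorm k j Y"
    using Dnorm_ge[OF \<Omega>, of X] Dnorm_ge[OF \<Omega>, of Y] by (rule add_mono)
  finally show "ereal (\<Omega> (X + Y) / ?F) \<le> Dnorm k j X + Dnorm k j Y" .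
qed

lemma Dnorm_scaleR:
  assumes "X \<in> chains k" "0 \<le> t"
  shows "Dnorm k j (t *\<^sub>R X) \<le> ereal t * Dnorm k j X"
proof (rule Dnorm_least)
  show "0 \<le> ereal t * Dnorm k j X"
    using assms(2) by (simp add: Dnorm_nonneg)
  fix \<Omega> :: "'a chain \<Rightarrow> real" assume \<Omega>: "kform k \<Omega>" "0 < formnorm k j \<Omega>" "formnorm k j \<Omega> < Orderings.top"
  let ?F = "enn2real (formnorm k j \<Omega>)"
  have "ereal (\<Omega> (t *\<^sub>R X) / ?F) = ereal t * ereal (\<Omega> X / ?F)"
    using kform_scaleR[OF \<Omega>(1) assms(1)] by simp
  also have "\<dots> \<le> ereal t * Dnorm k j X"
    using Dnorm_ge[OF \<Omega>] assms(2) by (intro ereal_mult_left_mono) simp_all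
  finally show "ereal (\<Omega> (t *\<^sub>R X) / ?F) \<le> ereal t * Dnorm k j X" .
qed

lemma Dnorm_scaleR_unit_le_1:
  assumes "X \<in> unit_diffchains k j" "\<bar>s\<bar> \<le> 1"
  shows "Dnorm k j (s *\<^sub>R X) \<le> 1"
proof (rule Dnorm_least)
  fix \<Omega> :: "'a chain \<Rightarrow> real" assume \<Omega>: "kform k \<Omega>" "0 < formnorm k j \<Omega>" "formnorm k j \<Omega> < Orderings.top"
  let ?F = "enn2real (formnorm k j \<Omega>)"
  have "0 < ?F"
    using \<Omega> by (simp add: enn2real_positive_iff)
  have X: "X \<in> chains k"
    using assms(1) by (auto simp: unit_diffchains_def intro: diffchain_in_chains)
  have "\<bar>s\<bar> * \<bar>\<Omega> X\<bar> \<le> 1 * ?F"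
    using abs_form_unit_le[OF assms(1) \<Omega>(3)] assms(2) by (intro mult_mono) simp_all
  then have "\<Omega> (s *\<^sub>R X) \<le> ?F"
    using kform_scaleR[OF \<Omega>(1) X] abs_ge_self[of "s * \<Omega> X"] by (simp add: abs_mult)
  with \<open>0 < ?F\<close> show "ereal (\<Omega> (s *\<^sub>R X) / ?F) \<le> 1"
    by simp
qed simp

lemma chain_bounded_by_formnorm0:
  assumes "Q \<in> chains k"
  obtains C where
    "\<And>\<Omega>. kform k \<Omega> \<Longrightarrow> formnorm k 0 \<Omega> < Orderings.top \<Longrightarrow> \<bar>\<Omega> Q\<bar> \<le> C * enn2real (formnorm k 0 \<Omega>)"
proof -
  let ?G = "{diffchain U p w | U p w. length U = 0 \<and> length w = k}"
  let ?F = "{\<Omega>. kform k \<Omega> \<and> formnorm k 0 \<Omega> < Orderings.top}"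
  have "Q \<in> span ?G"
    using chains_subset_Ddiff0 assms unfolding Ddiff_eq_span by blast
  moreover have "?G \<subseteq> chains k"
    by (auto intro: diffchain_in_chains)
  moreover have "\<exists>c. \<forall>\<Omega>\<in>?F. \<bar>\<Omega> X\<bar> \<le> c * enn2real (formnorm k 0 \<Omega>)" if "X \<in> ?G" for X
  proof -
    obtain p w where "length w = k" "X = diffchain [] p w"
      using \<open>X \<in> ?G\<close> by blast
    then show ?thesis
      using abs_form_diffchain_le[of k _ 0 "[]" w p] by (intro exI[of _ "mass w"]) auto
  qed
  ultimately obtain C where "\<And>\<Omega>. \<Omega> \<in> ?F \<Longrightarrow> \<bar>\<Omega> Q\<bar> \<le> C * enn2real (formnorm k 0 \<Omega>)"
    by (rule kform_span_bound) auto
  then show ?thesis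
    using that by blast
qed

lemma Dnorm0_finite:
  assumes "Q \<in> chains k"
  shows "Dnorm k 0 Q \<noteq> \<infinity>"
proof -
  obtain C where C:
    "\<And>\<Omega>. kform k \<Omega> \<Longrightarrow> formnorm k 0 \<Omega> < Orderings.top \<Longrightarrow> \<bar>\<Omega> Q\<bar> \<le> C * enn2real (formnorm k 0 \<Omega>)"
    using chain_bounded_by_formnorm0[OF assms] by blast
  have "Dnorm k 0 Q \<le> ereal \<bar>C\<bar>"
  proof (rule Dnorm_least)
    fix \<Omega> :: "'a chain \<Rightarrow> real"
    assume \<Omega>: "kform k \<Omega>" "0 < formnorm k 0 \<Omega>" "formnorm k 0 \<Omega> < Orderings.top"
    let ?F = "enn2real (formnorm k 0 \<Omega>)"
    have "0 < ?F"
      using \<Omega> by (simp add: enn2real_positive_iff)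
    moreover have "\<Omega> Q \<le> \<bar>C\<bar> * ?F"
      using C[OF \<Omega>(1,3)] \<open>0 < ?F\<close> by (smt (verit) mult_right_mono)
    ultimately show "ereal (\<Omega> Q / ?F) \<le> ereal \<bar>C\<bar>"
      by (simp add: divide_le_eq)
  qed simp
  then show ?thesis
    by auto
qed

lemma delta_eq_0_imp_eq_0:
  assumes "P \<in> chains k" "u \<noteq> 0" "delta u P = 0"
  shows "P = 0"
proof (rule ccontr)
  assume "P \<noteq> 0"
  then obtain q0 where q0: "P q0 \<noteq> 0"
    by (auto simp: fun_eq_iff)
  have periodic: "P (q - u) = P q" for q
    using assms(3) by (simp add: delta_def transl_def fun_eq_iff)
  have "P (q0 - real m *\<^sub>R u) = P q0" for m
  proof (induction m)
    case (Suc m)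
    have "q0 - real (Suc m) *\<^sub>R u = (q0 - real m *\<^sub>R u) - u"
      by (simp add: algebra_simps)
    then show ?case
      using Suc periodic by metis
  qed simp
  then have "range (\<lambda>m. q0 - real m *\<^sub>R u) \<subseteq> {q. P q \<noteq> 0}"
    using q0 by auto
  moreover have "inj (\<lambda>m. q0 - real m *\<^sub>R u)"
    using assms(2) by (auto simp: inj_def scaleR_cancel_right)
  ultimately have "infinite {q. P q \<noteq> 0}"
    by (meson finite_imageD finite_subset infinite_UNIV_nat)
  then show False
    using assms(1) by (simp add: chains_iff)
qed

lemma deltas_neq_0:
  "P \<in> chains k \<Longrightarrow> P \<noteq> 0 \<Longrightarrow> 0 \<notin> set U \<Longrightarrow> deltas U P \<noteq> 0"
  by (induction U) (auto dest: delta_eq_0_imp_eq_0[OF deltas_in_chains])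

lemma abs_deltas_le:
  assumes "\<And>q I. \<bar>P q I\<bar> \<le> B"
  shows "\<bar>deltas U P q I\<bar> \<le> 2 ^ length U * B"
proof (induction U arbitrary: q)
  case (Cons u U)
  have "\<bar>deltas (u # U) P q I\<bar> \<le> \<bar>deltas U P (q - u) I\<bar> + \<bar>deltas U P q I\<bar>"
    by (simp add: delta_def transl_def)
  also have "\<dots> \<le> 2 ^ length (u # U) * B"
    using Cons[of "q - u"] Cons[of q] by simp
  finally show ?case .
qed (use assms in simp)

(* For k = 0 there is nothing to rescale, and ||omega||_j = 0 does not make omega vanish on
   D_0^j.  Such an omega is handled by perturbing it with a point evaluation. *)
lemma ex_kform0_formnorm_pos_finite:
  "\<exists>\<Psi> :: 'a::euclidean_space chain \<Rightarrow> real.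
     kform 0 \<Psi> \<and> 0 < formnorm 0 j \<Psi> \<and> formnorm 0 j \<Psi> < Orderings.top"
proof -
  obtain e :: 'a where e: "e \<in> Basis"
    using nonempty_Basis by blast
  let ?X = "diffchain (replicate j e) 0 []"
  have unit: "?X \<in> unit_diffchains 0 j"
    using e by (force simp: unit_diffchains_def prod_list_replicate)
  have "mono (0::'a) (wedge []) 0 [] = 1"
    by (simp add: mono_def wedge_def)
  then have "mono (0::'a) (wedge []) \<noteq> 0"
    by (metis one_neq_zero zero_fun_apply)
  then have "?X \<noteq> 0"
    unfolding diffchain_def using e
    by (intro deltas_neq_0[where k = 0] mono_in_chains) (auto simp: kvectors_eq_span intro: span_base)
  then obtain q0 I0 where q0: "?X q0 I0 \<noteq> 0"
    by (auto simp: fun_eq_iff)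
  define \<Psi> where "\<Psi> X = X q0 I0" for X :: "'a chain"
  have "kform 0 \<Psi>"
    by (simp add: kform_iff \<Psi>_def)
  moreover have "0 < formnorm 0 j \<Psi>"
  proof -
    have "0 < ennreal \<bar>\<Psi> ?X\<bar>"
      using q0 by (simp add: \<Psi>_def)
    then show ?thesis
      using formnorm_upper[OF unit, of \<Psi>] by (rule order_less_le_trans)
  qed
  moreover have "formnorm 0 j \<Psi> \<le> ennreal (2 ^ j)"
  proof (rule formnorm_least)
    fix X :: "'a chain" assume "X \<in> unit_diffchains 0 j"
    then obtain U p where "length U = j" "X = deltas U (mono p (wedge []))"
      by (auto simp: unit_diffchains_def diffchain_def)
    moreover have "\<bar>mono p (wedge []) q I\<bar> \<le> 1" for q I
      by (simp add: mono_def wedge_def)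
    ultimately have "\<bar>\<Psi> X\<bar> \<le> 2 ^ j"
      unfolding \<Psi>_def using abs_deltas_le[of "mono p (wedge [])" 1 U q0 I0] by simp
    then show "ennreal \<bar>\<Psi> X\<bar> \<le> ennreal (2 ^ j)"
      by (rule ennreal_leI)
  qed
  then have "formnorm 0 j \<Psi> < Orderings.top"
    using le_less_trans by fastforce
  ultimately show ?thesis
    by blast
qed

lemma formnorm_add_null:
  assumes "formnorm k j \<Omega> = 0" "0 \<le> \<delta>"
  shows "formnorm k j (\<lambda>X. \<Omega> X + \<delta> * \<Psi> X) = ennreal \<delta> * formnorm k j \<Psi>"
proof -
  have "ennreal \<bar>\<Omega> X + \<delta> * \<Psi> X\<bar> = ennreal \<delta> * ennreal \<bar>\<Psi> X\<bar>" if "X \<in> unit_diffchains k j" for X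
  proof -
    have "\<Omega> X = 0"
      using formnorm_upper[OF that, of \<Omega>] assms(1) by simp
    then show ?thesis
      using assms(2) by (simp add: abs_mult ennreal_mult)
  qed
  then show ?thesis
    unfolding formnorm_eq_SUP SUP_mult_left_ennreal by (rule SUP_cong[OF refl])
qed

(* omega + delta psi has norm delta ||psi||_j, so the definition of ||X||_j gives
   omega X <= delta (||X||_j ||psi||_j - psi X) for every delta > 0. *)
lemma form_nonpos_if_formnorm_0:
  fixes \<Omega> \<Psi> :: "'a::euclidean_space chain \<Rightarrow> real"
  assumes \<Omega>: "kform k \<Omega>" "formnorm k j \<Omega> = 0"
    and \<Psi>: "kform k \<Psi>" "0 < formnorm k j \<Psi>" "formnorm k j \<Psi> < Orderings.top"
    and X: "X \<in> chains k" "Dnorm k j X \<noteq> \<infinity>"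
  shows "\<Omega> X \<le> 0"
proof (rule ccontr)
  assume "\<not> \<Omega> X \<le> 0"
  let ?F = "enn2real (formnorm k j \<Psi>)"
  let ?d = "real_of_ereal (Dnorm k j X)"
  define \<delta> where "\<delta> = \<Omega> X / (2 * (\<bar>?d * ?F - \<Psi> X\<bar> + 1))"
  have "0 < \<Omega> X" "0 < ?F"
    using \<open>\<not> \<Omega> X \<le> 0\<close> \<Psi> by (simp_all add: enn2real_positive_iff)
  moreover have den: "0 < 2 * (\<bar>?d * ?F - \<Psi> X\<bar> + 1)"
    by (intro mult_pos_pos add_nonneg_pos) simp_all
  ultimately have "0 < \<delta>"
    unfolding \<delta>_def by (intro divide_pos_pos)
  define \<Omega>' where "\<Omega>' Y = \<Omega> Y + \<delta> * \<Psi> Y" for Y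
  have "kform k \<Omega>'"
    using \<Omega>(1) \<Psi>(1) by (simp add: kform_iff \<Omega>'_def algebra_simps)
  moreover have norm': "formnorm k j \<Omega>' = ennreal \<delta> * formnorm k j \<Psi>"
    unfolding \<Omega>'_def using \<Omega>(2) \<open>0 < \<delta>\<close> by (intro formnorm_add_null) simp_all
  ultimately have "ereal (\<Omega>' X / enn2real (formnorm k j \<Omega>')) \<le> Dnorm k j X"
    using \<Psi> \<open>0 < \<delta>\<close> by (intro Dnorm_ge) (simp_all add: ennreal_mult_less_top ennreal_zero_less_mult_iff)
  also have "\<dots> = ereal ?d"
    using X(2) Dnorm_nonneg[of k j X] by (cases "Dnorm k j X") simp_all
  finally have "\<Omega> X + \<delta> * \<Psi> X \<le> ?d * (\<delta> * ?F)"
    using \<open>0 < \<delta>\<close> \<open>0 < ?F\<close> by (simp add: norm' \<Omega>'_def enn2real_mult divide_le_eq)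
  then have "\<Omega> X \<le> \<delta> * (?d * ?F - \<Psi> X)"
    by (simp add: algebra_simps)
  also have "\<dots> \<le> \<delta> * (\<bar>?d * ?F - \<Psi> X\<bar> + 1)"
    using \<open>0 < \<delta>\<close> by (intro mult_left_mono) simp_all
  also have "\<dots> = \<Omega> X / 2"
    using den unfolding \<delta>_def by (simp add: field_simps)
  finally show False
    using \<open>0 < \<Omega> X\<close> by simp
qed

lemma form_eq_0_if_formnorm_0:
  assumes \<Omega>: "kform k \<Omega>" "formnorm k j \<Omega> = 0" and "k \<noteq> 0" and X: "X \<in> Ddiff k j"
  shows "\<Omega> X = 0"
proof -
  let ?G = "{diffchain U p w | U p w. length U = j \<and> length w = k}"
  have "X \<in> span ?G"
    using X by (simp add: Ddiff_eq_span)
  moreover have "?G \<subseteq> chains k"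
    by (auto intro: diffchain_in_chains)
  moreover have "\<exists>c. \<forall>\<Phi>\<in>{\<Omega>}. \<bar>\<Phi> Y\<bar> \<le> c * enn2real (formnorm k j \<Phi>)" if "Y \<in> ?G" for Y
  proof -
    obtain U p w where Upw: "length U = j" "length w = k" "Y = diffchain U p w"
      using \<open>Y \<in> ?G\<close> by blast
    with \<open>k \<noteq> 0\<close> have "w \<noteq> []"
      by auto
    then have "\<bar>\<Omega> Y\<bar> \<le> prod_list (map norm U) * mass w * enn2real (formnorm k j \<Omega>)"
      using abs_form_diffchain_le[OF \<Omega>(1) _ Upw(1,2)] \<Omega>(2) Upw(3) by simp
    then show ?thesis
      by blast
  qed
  ultimately obtain C where "\<And>\<Phi>. \<Phi> \<in> {\<Omega>} \<Longrightarrow> \<bar>\<Phi> X\<bar> \<le> C * enn2real (formnorm k j \<Phi>)"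
    by (rule kform_span_bound) (use \<Omega>(1) in blast)+
  then show ?thesis
    using \<Omega>(2) by simp
qed

lemma form_le_Dnorm_formnorm:
  fixes \<Omega> :: "'a::euclidean_space chain \<Rightarrow> real"
  assumes \<Omega>: "kform k \<Omega>" "formnorm k j \<Omega> < Orderings.top"
    and X: "X \<in> Ddiff k j" "Dnorm k j X \<noteq> \<infinity>"
  shows "\<Omega> X \<le> real_of_ereal (Dnorm k j X) * enn2real (formnorm k j \<Omega>)"
proof (cases "formnorm k j \<Omega> = 0")
  case False
  then have pos: "0 < formnorm k j \<Omega>"
    by (simp add: zero_less_iff_neq_zero)
  let ?F = "enn2real (formnorm k j \<Omega>)"
  have "0 < ?F"
    using pos \<Omega>(2) by (simp add: enn2real_positive_iff)
  have "ereal (\<Omega> X / ?F) \<le> Dnorm k j X"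
    by (rule Dnorm_ge[OF \<Omega>(1) pos \<Omega>(2)])
  then have "\<Omega> X / ?F \<le> real_of_ereal (Dnorm k j X)"
    using X(2) Dnorm_nonneg[of k j X] by (cases "Dnorm k j X") simp_all
  then show ?thesis
    using \<open>0 < ?F\<close> by (simp add: divide_le_eq)
next
  case True
  have "\<Omega> X \<le> 0"
  proof (cases "k = 0")
    case True
    then obtain \<Psi> :: "'a chain \<Rightarrow> real"
      where \<Psi>: "kform k \<Psi>" "0 < formnorm k j \<Psi>" "formnorm k j \<Psi> < Orderings.top"
      using ex_kform0_formnorm_pos_finite[of j] by blast
    have "X \<in> chains k"
      using X(1) by (rule Ddiff_in_chains)
    then show ?thesis
      using form_nonpos_if_formnorm_0[OF \<Omega>(1) \<open>formnorm k j \<Omega> = 0\<close> \<Psi>] X(2) by blast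
  next
    case False
    with \<Omega>(1) True X(1) show ?thesis
      by (simp add: form_eq_0_if_formnorm_0)
  qed
  then show ?thesis
    using True by simp
qed

section \<open>The decomposition norm\<close>

lemma formnorm_le_natnorm: "j \<le> r \<Longrightarrow> formnorm k j \<Omega> \<le> natnorm k r \<Omega>"
  unfolding natnorm_def by (intro Max_ge) auto

definition decompositions :: "nat \<Rightarrow> nat \<Rightarrow> 'a::euclidean_space chain \<Rightarrow> (nat \<Rightarrow> 'a chain) set" where
  "decompositions k r P = {D. (\<forall>j\<le>r. D j \<in> Ddiff k j) \<and> P = (\<lambda>q I. \<Sum>j\<le>r. D j q I)}"

lemma decompositions_iff: "D \<in> decompositions k r P \<longleftrightarrow> (\<forall>j\<le>r. D j \<in> Ddiff k j) \<and> P = (\<Sum>j\<le>r. D j)"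
  by (simp add: decompositions_def fun_eq_iff sum_fun_apply)

lemma form_le_decomposition_cost:
  assumes \<Omega>: "kform k \<Omega>" "natnorm k r \<Omega> < Orderings.top"
    and D: "D \<in> decompositions k r P" and finite: "\<forall>j\<le>r. Dnorm k j (D j) \<noteq> \<infinity>"
  shows "\<Omega> P \<le> (\<Sum>j\<le>r. real_of_ereal (Dnorm k j (D j))) * enn2real (natnorm k r \<Omega>)"
proof -
  let ?d = "\<lambda>j. real_of_ereal (Dnorm k j (D j))" and ?n = "enn2real (natnorm k r \<Omega>)"
  have D_in: "\<And>j. j \<le> r \<Longrightarrow> D j \<in> Ddiff k j" and P: "P = (\<Sum>j\<le>r. D j)"
    using D by (simp_all add: decompositions_iff)
  then have "\<And>j. j \<in> {..r} \<Longrightarrow> D j \<in> chains k"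
    by (auto intro: Ddiff_in_chains)
  then have "\<Omega> P = (\<Sum>j\<le>r. \<Omega> (D j))"
    unfolding P by (rule kform_sum[OF \<Omega>(1)])
  also have "\<dots> \<le> (\<Sum>j\<le>r. ?d j * ?n)"
  proof (rule sum_mono)
    fix j assume "j \<in> {..r}"
    then have j: "j \<le> r"
      by simp
    have le: "formnorm k j \<Omega> \<le> natnorm k r \<Omega>"
      using j by (rule formnorm_le_natnorm)
    have "\<Omega> (D j) \<le> ?d j * enn2real (formnorm k j \<Omega>)"
      using form_le_Dnorm_formnorm[OF \<Omega>(1) _ D_in[OF j]] le \<Omega>(2) finite j by simp
    also have "\<dots> \<le> ?d j * ?n"
      using enn2real_mono[OF le \<Omega>(2)] Dnorm_nonneg[of k j "D j"]
      by (intro mult_left_mono) (simp_all add: real_of_ereal_pos)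
    finally show "\<Omega> (D j) \<le> ?d j * ?n" .
  qed
  finally show ?thesis
    by (simp add: sum_distrib_right)
qed

lemma chain_natnorm_le_decomposition:
  assumes D: "D \<in> decompositions k r P"
  shows "chain_natnorm k r P \<le> (\<Sum>j\<le>r. Dnorm k j (D j))"
proof (cases "\<forall>j\<le>r. Dnorm k j (D j) \<noteq> \<infinity>")
  case False
  then have "(\<Sum>j\<le>r. Dnorm k j (D j)) = \<infinity>"
    by (auto simp: sum_Pinfty)
  then show ?thesis
    by simp
next
  case True
  let ?d = "\<lambda>j. real_of_ereal (Dnorm k j (D j))"
  have "Dnorm k j (D j) = ereal (?d j)" if "j \<in> {..r}" for j
    using True that Dnorm_nonneg[of k j "D j"] by (cases "Dnorm k j (D j)") auto
  then have cost: "(\<Sum>j\<le>r. Dnorm k j (D j)) = ereal (\<Sum>j\<le>r. ?d j)"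
    by (simp add: sum_ereal[symmetric])
  have "0 \<le> (\<Sum>j\<le>r. ?d j)"
    by (intro sum_nonneg real_of_ereal_pos Dnorm_nonneg)
  moreover have "ereal (\<Omega> P / enn2real (natnorm k r \<Omega>)) \<le> ereal (\<Sum>j\<le>r. ?d j)"
    if \<Omega>: "kform k \<Omega>" "natnorm k r \<Omega> < Orderings.top" for \<Omega>
  proof (cases "enn2real (natnorm k r \<Omega>) = 0")
    case False
    then have "0 < enn2real (natnorm k r \<Omega>)"
      by (simp add: less_le)
    with form_le_decomposition_cost[OF \<Omega> D True] show ?thesis
      by (simp add: divide_le_eq)
  qed (simp add: \<open>0 \<le> (\<Sum>j\<le>r. ?d j)\<close>)
  ultimately show ?thesis
    unfolding chain_natnorm_def cost by (intro Sup_least) auto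
qed

definition decomposition_norm :: "nat \<Rightarrow> nat \<Rightarrow> 'a::euclidean_space chain \<Rightarrow> ereal" where
  "decomposition_norm k r P = (INF D\<in>decompositions k r P. \<Sum>j\<le>r. Dnorm k j (D j))"

lemma decomposition_norm_le:
  "D \<in> decompositions k r P \<Longrightarrow> decomposition_norm k r P \<le> (\<Sum>j\<le>r. Dnorm k j (D j))"
  unfolding decomposition_norm_def by (rule INF_lower)

lemma decomposition_norm_nonneg: "0 \<le> decomposition_norm k r P"
  unfolding decomposition_norm_def by (intro INF_greatest sum_nonneg Dnorm_nonneg)

lemma single_decomposition:
  assumes "j \<le> r" "X \<in> Ddiff k j"
  shows "(\<lambda>i. if i = j then X else 0) \<in> decompositions k r X"
    and "(\<Sum>i\<le>r. Dnorm k i (if i = j then X else 0)) = Dnorm k j X"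
proof -
  have "(\<Sum>i\<le>r. if i = j then X else 0) = X"
    using assms(1) by (simp add: sum.delta')
  then show "(\<lambda>i. if i = j then X else 0) \<in> decompositions k r X"
    using assms(2) by (simp add: decompositions_iff zero_in_Ddiff)
  have "(\<Sum>i\<le>r. Dnorm k i (if i = j then X else 0)) = (\<Sum>i\<le>r. if i = j then Dnorm k j X else 0)"
    by (rule sum.cong) simp_all
  then show "(\<Sum>i\<le>r. Dnorm k i (if i = j then X else 0)) = Dnorm k j X"
    using assms(1) by (simp add: sum.delta')
qed

lemma decomposition_norm_le_Dnorm:
  assumes "j \<le> r" "X \<in> Ddiff k j"
  shows "decomposition_norm k r X \<le> Dnorm k j X"
  using decomposition_norm_le[OF single_decomposition(1)[OF assms]]
  unfolding single_decomposition(2)[OF assms] .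

lemma decompositions_nonempty: "P \<in> chains k \<Longrightarrow> decompositions k r P \<noteq> {}"
  using single_decomposition(1)[OF le0 chain_in_Ddiff0] by auto

lemma decomposition_norm_finite:
  assumes "P \<in> chains k"
  shows "decomposition_norm k r P \<noteq> \<infinity>"
proof -
  have "decomposition_norm k r P \<le> Dnorm k 0 P"
    using decomposition_norm_le_Dnorm[OF le0 chain_in_Ddiff0[OF assms]] .
  with Dnorm0_finite[OF assms] show ?thesis
    by auto
qed

lemma decomposition_norm_add:
  assumes "P \<in> chains k" "Q \<in> chains k"
  shows "decomposition_norm k r (P + Q) \<le> decomposition_norm k r P + decomposition_norm k r Q"
proof -
  let ?cost = "\<lambda>D. \<Sum>j\<le>r. Dnorm k j (D j)"
  have cost_nonneg: "0 \<le> ?cost D" for D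
    by (intro sum_nonneg Dnorm_nonneg)
  have "decomposition_norm k r (P + Q) \<le> ?cost D + ?cost E"
    if D: "D \<in> decompositions k r P" and E: "E \<in> decompositions k r Q" for D E
  proof -
    have "(\<lambda>j. D j + E j) \<in> decompositions k r (P + Q)"
      using D E by (simp add: decompositions_iff sum.distrib subspace_add[OF subspace_Ddiff])
    then have "decomposition_norm k r (P + Q) \<le> (\<Sum>j\<le>r. Dnorm k j (D j + E j))"
      by (rule decomposition_norm_le)
    also have "\<dots> \<le> (\<Sum>j\<le>r. Dnorm k j (D j) + Dnorm k j (E j))"
      using D E by (intro sum_mono Dnorm_add) (auto simp: decompositions_iff intro: Ddiff_in_chains)
    finally show ?thesis
      by (simp add: sum.distrib)
  qed
  note pairwise = this
  have "decomposition_norm k r (P + Q) \<le> ?cost D + decomposition_norm k r Q"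
    if D: "D \<in> decompositions k r P" for D
  proof -
    have "decomposition_norm k r (P + Q) \<le> (INF E\<in>decompositions k r Q. ?cost D + ?cost E)"
      using pairwise[OF D] by (rule INF_greatest)
    also have "\<dots> = ?cost D + decomposition_norm k r Q"
      unfolding decomposition_norm_def[of k r Q] using decompositions_nonempty[OF assms(2)] cost_nonneg[of D]
      by (intro INF_ereal_add_right) (simp_all add: cost_nonneg)
    finally show ?thesis .
  qed
  then have "decomposition_norm k r (P + Q) \<le> (INF D\<in>decompositions k r P. ?cost D + decomposition_norm k r Q)"
    by (rule INF_greatest)
  also have "\<dots> = decomposition_norm k r P + decomposition_norm k r Q"
    unfolding decomposition_norm_def[of k r P] using decompositions_nonempty[OF assms(1)]
    by (intro INF_ereal_add_left) (simp_all add: decomposition_norm_nonneg cost_nonneg)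
  finally show ?thesis .
qed

lemma decomposition_norm_scaleR_le:
  assumes "P \<in> chains k" "0 < t"
  shows "decomposition_norm k r (t *\<^sub>R P) \<le> ereal t * decomposition_norm k r P"
proof -
  let ?cost = "\<lambda>D. \<Sum>j\<le>r. Dnorm k j (D j)"
  have "decomposition_norm k r (t *\<^sub>R P) \<le> ereal t * ?cost D" if D: "D \<in> decompositions k r P" for D
  proof -
    have "(\<lambda>j. t *\<^sub>R D j) \<in> decompositions k r (t *\<^sub>R P)"
      using D by (simp add: decompositions_iff scaleR_sum_right subspace_scale[OF subspace_Ddiff])
    then have "decomposition_norm k r (t *\<^sub>R P) \<le> (\<Sum>j\<le>r. Dnorm k j (t *\<^sub>R D j))"
      by (rule decomposition_norm_le)
    also have "\<dots> \<le> (\<Sum>j\<le>r. ereal t * Dnorm k j (D j))"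
      using D assms(2) by (intro sum_mono Dnorm_scaleR) (auto simp: decompositions_iff intro: Ddiff_in_chains)
    also have "\<dots> = ereal t * ?cost D"
      by (rule sum_ereal_right_distrib[symmetric]) (simp add: Dnorm_nonneg)
    finally show ?thesis .
  qed
  then have "decomposition_norm k r (t *\<^sub>R P) \<le> Inf {ereal t * x | x. x \<in> ?cost ` decompositions k r P}"
    by (intro Inf_greatest) blast
  also have "\<dots> = ereal t * decomposition_norm k r P"
    unfolding decomposition_norm_def using ereal_Inf_cmult[OF assms(2)] by simp
  finally show ?thesis .
qed

lemma ereal_real_decomposition_norm:
  "P \<in> chains k \<Longrightarrow> ereal (real_of_ereal (decomposition_norm k r P)) = decomposition_norm k r P"
  using decomposition_norm_finite[of P k r] decomposition_norm_nonneg[of k r P]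
  by (cases "decomposition_norm k r P") simp_all

lemma real_decomposition_norm_scaleR_le:
  assumes "P \<in> chains k" "0 < t"
  shows "real_of_ereal (decomposition_norm k r (t *\<^sub>R P)) \<le> t * real_of_ereal (decomposition_norm k r P)"
proof -
  have "t *\<^sub>R P \<in> chains k"
    using assms(1) by (rule subspace_scale[OF subspace_chains])
  then have "ereal (real_of_ereal (decomposition_norm k r (t *\<^sub>R P))) \<le>
      ereal t * ereal (real_of_ereal (decomposition_norm k r P))"
    using decomposition_norm_scaleR_le[OF assms, of r]
    by (simp add: ereal_real_decomposition_norm assms(1))
  then show ?thesis
    by simp
qed

lemma sublinear_on_decomposition_norm:
  "sublinear_on (chains k :: 'a::euclidean_space chain set) (\<lambda>P. real_of_ereal (decomposition_norm k r P))"
proof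
  show "subspace (chains k)"
    by (rule subspace_chains)
  fix P Q :: "'a chain" assume P: "P \<in> chains k" and Q: "Q \<in> chains k"
  have "ereal (real_of_ereal (decomposition_norm k r (P + Q))) \<le>
      ereal (real_of_ereal (decomposition_norm k r P)) + ereal (real_of_ereal (decomposition_norm k r Q))"
    using decomposition_norm_add[OF P Q] P Q subspace_add[OF subspace_chains P Q]
    by (simp add: ereal_real_decomposition_norm)
  then show "real_of_ereal (decomposition_norm k r (P + Q)) \<le>
      real_of_ereal (decomposition_norm k r P) + real_of_ereal (decomposition_norm k r Q)"
    by simp
next
  fix P :: "'a chain" and t :: real assume P: "P \<in> chains k" and t: "0 < t"
  have "real_of_ereal (decomposition_norm k r P) = real_of_ereal (decomposition_norm k r ((1 / t) *\<^sub>R (t *\<^sub>R P)))"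
    using t by simp
  also have "\<dots> \<le> (1 / t) * real_of_ereal (decomposition_norm k r (t *\<^sub>R P))"
    using P t by (intro real_decomposition_norm_scaleR_le subspace_scale[OF subspace_chains]) simp_all
  finally have "t * real_of_ereal (decomposition_norm k r P) \<le> real_of_ereal (decomposition_norm k r (t *\<^sub>R P))"
    using t by (simp add: field_simps)
  with real_decomposition_norm_scaleR_le[OF P t]
  show "real_of_ereal (decomposition_norm k r (t *\<^sub>R P)) = t * real_of_ereal (decomposition_norm k r P)"
    by (rule antisym)
qed

lemma decomposition_norm_unit_le_1:
  assumes "j \<le> r" "X \<in> unit_diffchains k j" "\<bar>s\<bar> \<le> 1"
  shows "decomposition_norm k r (s *\<^sub>R X) \<le> 1"
proof -
  have "X \<in> Ddiff k j"
    using assms(2) by (auto simp: unit_diffchains_def Ddiff_eq_span intro: span_base)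
  then have "s *\<^sub>R X \<in> Ddiff k j"
    by (rule subspace_scale[OF subspace_Ddiff])
  then have "decomposition_norm k r (s *\<^sub>R X) \<le> Dnorm k j (s *\<^sub>R X)"
    by (rule decomposition_norm_le_Dnorm[OF assms(1)])
  also have "\<dots> \<le> 1"
    using assms(2,3) by (rule Dnorm_scaleR_unit_le_1)
  finally show ?thesis .
qed

lemma natnorm_le_1_if_le_decomposition_norm:
  assumes f: "kform k f" and f_le: "\<And>Q. Q \<in> chains k \<Longrightarrow> f Q \<le> real_of_ereal (decomposition_norm k r Q)"
  shows "natnorm k r f \<le> 1"
proof -
  have "\<bar>f X\<bar> \<le> 1" if "j \<le> r" "X \<in> unit_diffchains k j" for j X
  proof -
    have X: "X \<in> chains k"
      using that(2) by (auto simp: unit_diffchains_def intro: diffchain_in_chains)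
    have "s * f X \<le> 1" if "\<bar>s\<bar> \<le> 1" for s
    proof -
      have sX: "s *\<^sub>R X \<in> chains k"
        using X by (rule subspace_scale[OF subspace_chains])
      have "ereal (s * f X) \<le> decomposition_norm k r (s *\<^sub>R X)"
        using f_le[OF sX] kform_scaleR[OF f X] ereal_real_decomposition_norm[OF sX]
        by (metis ereal_less_eq(3))
      also have "\<dots> \<le> 1"
        using \<open>j \<le> r\<close> \<open>X \<in> unit_diffchains k j\<close> that by (rule decomposition_norm_unit_le_1)
      finally show ?thesis
        by simp
    qed
    from this[of 1] this[of "- 1"] show ?thesis
      by simp
  qed
  then show ?thesis
    unfolding natnorm_def by (auto intro!: formnorm_least simp: ennreal_le_1)
qed

lemma formnorm0_pos_if_nonzero:
  assumes \<Omega>: "kform k \<Omega>" and P: "P \<in> chains k" "\<Omega> P \<noteq> 0"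
  shows "0 < formnorm k 0 \<Omega>"
proof (rule ccontr)
  assume "\<not> 0 < formnorm k 0 \<Omega>"
  then have "formnorm k 0 \<Omega> = 0"
    by (simp add: zero_less_iff_neq_zero)
  moreover obtain C where "\<And>\<Omega>. kform k \<Omega> \<Longrightarrow> formnorm k 0 \<Omega> < Orderings.top \<Longrightarrow>
      \<bar>\<Omega> P\<bar> \<le> C * enn2real (formnorm k 0 \<Omega>)"
    using chain_bounded_by_formnorm0[OF P(1)] by blast
  ultimately have "\<Omega> P = 0"
    using \<Omega> by fastforce
  with P(2) show False ..
qed

lemma chain_natnorm_nonneg: "0 \<le> chain_natnorm k r P"
  unfolding chain_natnorm_def by (rule Sup_upper) simp

lemma chain_natnorm_ge:
  assumes "kform k \<Omega>" "natnorm k r \<Omega> < Orderings.top" "P \<in> chains k" "\<Omega> P \<noteq> 0"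
  shows "ereal (\<Omega> P / enn2real (natnorm k r \<Omega>)) \<le> chain_natnorm k r P"
  unfolding chain_natnorm_def using assms by (intro Sup_upper insertI2) blast

lemma decomposition_norm_le_chain_natnorm:
  assumes P: "P \<in> chains k"
  shows "decomposition_norm k r P \<le> chain_natnorm k r P"
proof -
  let ?p = "\<lambda>Q. real_of_ereal (decomposition_norm k r Q)"
  obtain f where "\<And>Q R. Q \<in> chains k \<Longrightarrow> R \<in> chains k \<Longrightarrow> f (Q + R) = f Q + f R"
    and "\<And>t Q. Q \<in> chains k \<Longrightarrow> f (t *\<^sub>R Q) = t * f Q"
    and f_le: "\<And>Q. Q \<in> chains k \<Longrightarrow> f Q \<le> ?p Q" and f_P: "f P = ?p P"
    using sublinear_on.Hahn_Banach[OF sublinear_on_decomposition_norm P] by blast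
  then have f: "kform k f"
    by (simp add: kform_iff)
  have norm_P: "decomposition_norm k r P = ereal (?p P)"
    using ereal_real_decomposition_norm[OF P] by simp
  show ?thesis
  proof (cases "?p P = 0")
    case True
    then show ?thesis
      using norm_P chain_natnorm_nonneg by (simp flip: zero_ereal_def)
  next
    case False
    then have "0 < ?p P"
      using decomposition_norm_nonneg[of k r P] by (simp add: real_of_ereal_pos less_le)
    have natnorm_le_1: "natnorm k r f \<le> 1"
      using f f_le by (rule natnorm_le_1_if_le_decomposition_norm)
    have "f P \<noteq> 0"
      using f_P \<open>0 < ?p P\<close> by simp
    have "0 < formnorm k 0 f"
      using f P \<open>f P \<noteq> 0\<close> by (rule formnorm0_pos_if_nonzero)
    also have "\<dots> \<le> natnorm k r f"
      by (rule formnorm_le_natnorm) simp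
    finally have "0 < enn2real (natnorm k r f)" "enn2real (natnorm k r f) \<le> 1"
      using natnorm_le_1 enn2real_mono[OF natnorm_le_1]
      by (simp_all add: enn2real_positive_iff top.not_eq_extremum le_less_trans)
    then have "?p P \<le> f P / enn2real (natnorm k r f)"
      using f_P \<open>0 < ?p P\<close> by (simp add: le_divide_eq mult_left_le)
    also have "ereal \<dots> \<le> chain_natnorm k r P"
      using f natnorm_le_1 P \<open>f P \<noteq> 0\<close> by (intro chain_natnorm_ge) (simp_all add: le_less_trans)
    finally show ?thesis
      using norm_P by simp
  qed
qed

theorem mainTheorem2:
  fixes P :: "'a::euclidean_space chain" and k r :: nat
  assumes "P \<in> chains k"
  shows "chain_natnorm k r P =
    (INF D \<in> {D. (\<forall>j\<le>r. D j \<in> Ddiff k j) \<and> P = (\<lambda>q I. \<Sum>j\<le>r. D j q I)}.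
       \<Sum>j\<le>r. Dnorm k j (D j))"
proof -
  have "chain_natnorm k r P \<le> decomposition_norm k r P"
    unfolding decomposition_norm_def by (rule INF_greatest) (rule chain_natnorm_le_decomposition)
  moreover have "decomposition_norm k r P \<le> chain_natnorm k r P"
    using assms by (rule decomposition_norm_le_chain_natnorm)
  ultimately show ?thesis
    unfolding decomposition_norm_def decompositions_def by (rule antisym)
qed

end
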